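(* Let $\nu>0$, $0<K<\nu^2/2$, and let $(\Phi_m)$ satisfy the standing assumptions in the context. Let $W\in\mathcal{C}_K$. Then $\mathcal{P}(\mathcal{T}(W))\ge\mathcal{P}(W)$, and equality holds if and only if $W=\mathcal{T}(W)$. Moreover, if $W=\mathcal{T}(W)$, then $W$ satisfies $$c^2W=\sum_{m=1}^\infty A_m\big(-\Phi_m'(\nu m-A_mW)\big)+\eta$$ with $c=\mu(W)^{-1/2}$ and $\eta=\sum_{m=1}^\infty m\,\Phi_m'(\nu m)$ (a convergent series).
   Context: $A_m f(\xi):=\int_{-m/2}^{m/2} f(\xi+s)\,ds$. $\Psi_m(r):=\Phi_m(\nu m-r)-\Phi_m(\nu m)+\Phi_m'(\nu m)r$ for $r\in[0,\nu m)$. $\mathcal{P}(W):=\int_{\mathbb{R}}\sum_{m\ge1}\Psi_m(A_mW(s))\,ds$, $\partial\mathcal{P}(W):=\sum_{m\ge1}A_m\Psi_m'(A_mW)$, $\mu(W):=\|W\|_2/\|\partial\mathcal{P}(W)\|_2$, $\mathcal{T}(W):=\mu(W)\,\partial\mathcal{P}(W)$. $\mathcal{C}$ is the $\mathsf{L}^2(\mathbb{R})$-closure of $\{W\in C_c^\infty(\mathbb{R}): W(x)=W(-x)\ge0,\ \dot W(x)=-\dot W(-x)\le0\ \forall x\ge0\}$; $\mathcal{C}_K:=\{W\in\mathcal{C}:\frac12\|W\|_2^2=K\}$. Standing assumptions: for every $m$, $\Phi_m:[0,\infty)\to[0,\infty)$, $\Phi_m\in C^4([0,\infty))$, $\Phi_m\ge0,\Phi_m'\le0,\Phi_m''\ge0,\Phi_m'''\le0,\Phi_m^{(4)}\ge0$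 (strict for $m=1$, $s>0$); and for a fixed $\gamma\in(5/2,3)$ the series $\sum_m\Phi_m'(\nu m-\sqrt{2Km})m$, $\sum_m\Phi_m''(\nu m-\sqrt{2Km})m^2$, $\sum_m\Phi_m''(\nu m)m^\gamma$, $\sum_m\Phi_m'''(\nu m-\sqrt{2Km})m^{3/2}$ are finite. *)

theory Defs
  imports "HOL-Analysis.Analysis"
begin

definition Aop :: "nat \<Rightarrow> (real \<Rightarrow> real) \<Rightarrow> real \<Rightarrow> real" where
  "Aop m f \<xi> = (LBINT s:{\<xi> - real m / 2 .. \<xi> + real m / 2}. f s)"

text \<open>Psi_m(r) = Phi_m(nu m - r) - Phi_m(nu m) + Phi_m'(nu m) r; Phi1 is the derivative of Phi.\<close>
definition Psi :: "(nat \<Rightarrow> real \<Rightarrow> real) \<Rightarrow> (nat \<Rightarrow> real \<Rightarrow> real) \<Rightarrow> real \<Rightarrow> nat \<Rightarrow> real \<Rightarrow> real" where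
  "Psi \<Phi> \<Phi>1 \<nu> m r = \<Phi> m (\<nu> * real m - r) - \<Phi> m (\<nu> * real m) + \<Phi>1 m (\<nu> * real m) * r"

definition Psi' :: "(nat \<Rightarrow> real \<Rightarrow> real) \<Rightarrow> real \<Rightarrow> nat \<Rightarrow> real \<Rightarrow> real" where
  "Psi' \<Phi>1 \<nu> m r = - \<Phi>1 m (\<nu> * real m - r) + \<Phi>1 m (\<nu> * real m)"

definition Pfun :: "(nat \<Rightarrow> real \<Rightarrow> real) \<Rightarrow> (nat \<Rightarrow> real \<Rightarrow> real) \<Rightarrow> real \<Rightarrow> (real \<Rightarrow> real) \<Rightarrow> real" where
  "Pfun \<Phi> \<Phi>1 \<nu> W = (LINT s|lborel. (\<Sum>m. Psi \<Phi> \<Phi>1 \<nu> (Suc m) (Aop (Suc m) W s)))"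

definition dP :: "(nat \<Rightarrow> real \<Rightarrow> real) \<Rightarrow> real \<Rightarrow> (real \<Rightarrow> real) \<Rightarrow> real \<Rightarrow> real" where
  "dP \<Phi>1 \<nu> W = (\<lambda>\<xi>. \<Sum>m. Aop (Suc m) (\<lambda>s. Psi' \<Phi>1 \<nu> (Suc m) (Aop (Suc m) W s)) \<xi>)"

definition L2norm :: "(real \<Rightarrow> real) \<Rightarrow> real" where
  "L2norm f = sqrt (LINT x|lborel. (f x)\<^sup>2)"

definition muW :: "(nat \<Rightarrow> real \<Rightarrow> real) \<Rightarrow> real \<Rightarrow> (real \<Rightarrow> real) \<Rightarrow> real" where
  "muW \<Phi>1 \<nu> W = L2norm W / L2norm (dP \<Phi>1 \<nu> W)"

definition Top :: "(nat \<Rightarrow> real \<Rightarrow> real) \<Rightarrow> real \<Rightarrow> (real \<Rightarrow> real) \<Rightarrow> real \<Rightarrow> real" where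
  "Top \<Phi>1 \<nu> W = (\<lambda>\<xi>. muW \<Phi>1 \<nu> W * dP \<Phi>1 \<nu> W \<xi>)"

text \<open>Generating set of C: smooth, compactly supported, even, nonnegative, nonincreasing on [0,oo).
  C^infinity is written out: a sequence of successive derivatives D with D 0 = W.\<close>
definition C0 :: "(real \<Rightarrow> real) set" where
  "C0 = {W. (\<exists>D :: nat \<Rightarrow> real \<Rightarrow> real. D 0 = W \<and>
              (\<forall>k x. (D k has_real_derivative D (Suc k) x) (at x)) \<and>
              (\<exists>R. \<forall>x. \<bar>x\<bar> > R \<longrightarrow> W x = 0) \<and>
              (\<forall>x\<ge>0. W x = W (-x) \<and> W x \<ge> 0 \<and> D 1 x = - D 1 (-x) \<and> D 1 x \<le> 0))}"

definition square_integrable :: "(real \<Rightarrow> real) \<Rightarrow> bool" where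
  "square_integrable f \<longleftrightarrow> f \<in> borel_measurable lborel \<and> integrable lborel (\<lambda>x. (f x)\<^sup>2)"

text \<open>C = L^2 closure of C0 (as a set of functions, i.e. all representatives).\<close>
definition Ccl :: "(real \<Rightarrow> real) set" where
  "Ccl = {W. square_integrable W \<and>
            (\<exists>f :: nat \<Rightarrow> real \<Rightarrow> real. (\<forall>n. f n \<in> C0) \<and>
               (\<lambda>n. LINT x|lborel. (f n x - W x)\<^sup>2) \<longlonglongrightarrow> 0)}"

definition CK :: "real \<Rightarrow> (real \<Rightarrow> real) set" where
  "CK K = {W \<in> Ccl. (1/2) * (L2norm W)\<^sup>2 = K}"

end

theory Submission
  imports Defs
begin

(* Each Psi_m is convex on [-sqrt (2 K m), sqrt (2 K m)]: this interval contains every value of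
   A_m W for |W|_2^2 = 2 K (Cauchy-Schwarz on a window of length m), and K < nu^2/2 keeps
   nu m - r positive there.  Since A_m is symmetric, dP is the L^2-gradient of P, so P lies above
   its tangents on the sphere: P(V) - P(W) >= <dP(W), V - W>.  For V = T(W) = mu dP(W), which lies
   on the same sphere, <dP(W), T(W)> = |W| |dP(W)| >= <dP(W), W> by Cauchy-Schwarz, with equality
   only if W is a positive multiple of dP(W), i.e. W = T(W).  Here dP(W) /= 0 because Psi_1 is
   strictly convex and A_1 is injective on nonnegative functions.  The Euler-Lagrange equation is
   W = mu dP(W) with Psi_m'(r) = - Phi_m'(nu m - r) + Phi_m'(nu m), the constant being multiplied
   by m under A_m. *)

lemma has_real_derivative_at_if_within_atLeast:
  assumes "(f has_real_derivative f') (at x within {0..})" and "0 < x"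
  shows "(f has_real_derivative f') (at x)"
  using assms by (simp add: at_within_interior[of x "{0..}"])

lemma MVT_min_max:
  fixes F F' :: "real \<Rightarrow> real"
  assumes "\<And>x. min a b \<le> x \<Longrightarrow> x \<le> max a b \<Longrightarrow> (F has_real_derivative F' x) (at x)"
  shows "\<exists>z. min a b \<le> z \<and> z \<le> max a b \<and> F b - F a = (b - a) * F' z"
proof (cases a b rule: linorder_cases)
  case less
  with MVT2[of a b F F'] assms obtain z where "a < z" "z < b" "F b - F a = (b - a) * F' z"
    by force
  with less show ?thesis by (intro exI[of _ z]) auto
next
  case equal
  then show ?thesis by auto
next
  case greater
  with MVT2[of b a F F'] assms obtain z where "b < z" "z < a" "F a - F b = (a - b) * F' z"
    by force
  then show ?thesis by (intro exI[of _ z]) (auto simp: algebra_simps)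
qed

lemma borel_measurable_continuous_on_comp:
  fixes F :: "real \<Rightarrow> real"
  assumes "S \<in> sets borel" "continuous_on S F" "h \<in> borel_measurable M" "\<And>x. h x \<in> S"
  shows "(\<lambda>x. F (h x)) \<in> borel_measurable M"
proof -
  have "(\<lambda>y. indicator S y *\<^sub>R F y) \<in> borel_measurable borel"
    using assms(1,2) by (rule borel_measurable_continuous_on_indicator)
  from measurable_compose[OF assms(3) this] show ?thesis
    using assms(4) by simp
qed

lemma nonneg_quadratic_imp_discriminant_le:
  fixes A B C :: real
  assumes "0 \<le> A" and "\<And>t. 0 \<le> t\<^sup>2 * A - 2 * t * B + C"
  shows "B\<^sup>2 \<le> A * C"
proof (cases "A = 0")
  case True
  show ?thesis
  proof (rule ccontr)
    assume "\<not> ?thesis"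
    then have "B \<noteq> 0" using True by simp
    have "0 \<le> ((C + 1) / (2 * B))\<^sup>2 * A - 2 * ((C + 1) / (2 * B)) * B + C" by (rule assms)
    also have "\<dots> = -1" using True \<open>B \<noteq> 0\<close> by (simp add: field_simps)
    finally show False by simp
  qed
next
  case False
  then have "0 < A" using assms(1) by simp
  have "0 \<le> (B / A)\<^sup>2 * A - 2 * (B / A) * B + C" by (rule assms)
  also have "\<dots> = (A * C - B\<^sup>2) / A" using \<open>0 < A\<close> by (simp add: field_simps power2_eq_square)
  finally show ?thesis using \<open>0 < A\<close> by (simp add: zero_le_divide_iff)
qed

lemma
  fixes f g :: "'a \<Rightarrow> real"
  assumes [measurable]: "f \<in> borel_measurable M" "g \<in> borel_measurable M"
    and f2: "integrable M (\<lambda>x. (f x)\<^sup>2)" and g2: "integrable M (\<lambda>x. (g x)\<^sup>2)"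
  shows integrable_mult_if_square_integrable: "integrable M (\<lambda>x. f x * g x)"
    and Cauchy_Schwarz_integral: "(\<integral>x. f x * g x \<partial>M)\<^sup>2 \<le> (\<integral>x. (f x)\<^sup>2 \<partial>M) * (\<integral>x. (g x)\<^sup>2 \<partial>M)"
proof -
  show fg: "integrable M (\<lambda>x. f x * g x)"
  proof (rule Bochner_Integration.integrable_bound[OF Bochner_Integration.integrable_add[OF f2 g2]])
    show "AE x in M. norm (f x * g x) \<le> norm ((f x)\<^sup>2 + (g x)\<^sup>2)"
    proof (rule AE_I2)
      fix x
      have "0 \<le> (\<bar>f x\<bar> - \<bar>g x\<bar>)\<^sup>2" by simp
      then have "2 * (\<bar>f x\<bar> * \<bar>g x\<bar>) \<le> (f x)\<^sup>2 + (g x)\<^sup>2"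
        by (simp add: power2_eq_square algebra_simps)
      then have "\<bar>f x\<bar> * \<bar>g x\<bar> \<le> (f x)\<^sup>2 + (g x)\<^sup>2"
        using mult_nonneg_nonneg[OF abs_ge_zero abs_ge_zero, of "f x" "g x"] by linarith
      then show "norm (f x * g x) \<le> norm ((f x)\<^sup>2 + (g x)\<^sup>2)"
        by (simp add: abs_mult)
    qed
  qed simp
  have "0 \<le> t\<^sup>2 * (\<integral>x. (f x)\<^sup>2 \<partial>M) - 2 * t * (\<integral>x. f x * g x \<partial>M) + (\<integral>x. (g x)\<^sup>2 \<partial>M)" for t
  proof -
    have "(\<lambda>x. (t * f x - g x)\<^sup>2) = (\<lambda>x. t\<^sup>2 * (f x)\<^sup>2 - 2 * t * (f x * g x) + (g x)\<^sup>2)"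
      by (auto simp: power2_eq_square algebra_simps)
    then have "(\<integral>x. (t * f x - g x)\<^sup>2 \<partial>M)
        = t\<^sup>2 * (\<integral>x. (f x)\<^sup>2 \<partial>M) - 2 * t * (\<integral>x. f x * g x \<partial>M) + (\<integral>x. (g x)\<^sup>2 \<partial>M)"
      using f2 g2 fg by simp
    moreover have "0 \<le> (\<integral>x. (t * f x - g x)\<^sup>2 \<partial>M)" by simp
    ultimately show ?thesis by simp
  qed
  then show "(\<integral>x. f x * g x \<partial>M)\<^sup>2 \<le> (\<integral>x. (f x)\<^sup>2 \<partial>M) * (\<integral>x. (g x)\<^sup>2 \<partial>M)"
    by (intro nonneg_quadratic_imp_discriminant_le) auto
qed

lemma square_integrable_measurable:
  "square_integrable f \<Longrightarrow> f \<in> borel_measurable lborel"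
  and square_integrable_integrable: "square_integrable f \<Longrightarrow> integrable lborel (\<lambda>x. (f x)\<^sup>2)"
  by (simp_all add: square_integrable_def)

lemma square_integrable_abs: "square_integrable f \<Longrightarrow> square_integrable (\<lambda>x. \<bar>f x\<bar>)"
  by (simp add: square_integrable_def borel_measurable_abs)

lemma square_integrable_cmult: "square_integrable f \<Longrightarrow> square_integrable (\<lambda>x. c * f x)"
  by (simp add: square_integrable_def power_mult_distrib borel_measurable_times)

lemma square_integrable_integrable_mult:
  "square_integrable f \<Longrightarrow> square_integrable g \<Longrightarrow> integrable lborel (\<lambda>x. f x * g x)"
  by (rule integrable_mult_if_square_integrable) (auto simp: square_integrable_def)

lemma square_integrable_diff:
  assumes "square_integrable f" "square_integrable g"
  shows "square_integrable (\<lambda>x. f x - g x)"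
proof -
  have "(\<lambda>x. (f x - g x)\<^sup>2) = (\<lambda>x. (f x)\<^sup>2 - 2 * (f x * g x) + (g x)\<^sup>2)"
    by (simp add: fun_eq_iff power2_eq_square algebra_simps)
  then show ?thesis
    using assms square_integrable_integrable_mult[OF assms]
    by (simp add: square_integrable_def borel_measurable_diff)
qed

lemma square_integrable_Cauchy_Schwarz:
  "square_integrable f \<Longrightarrow> square_integrable g \<Longrightarrow>
   (\<integral>x. f x * g x \<partial>lborel)\<^sup>2 \<le> (\<integral>x. (f x)\<^sup>2 \<partial>lborel) * (\<integral>x. (g x)\<^sup>2 \<partial>lborel)"
  by (rule Cauchy_Schwarz_integral) (auto simp: square_integrable_def)

lemma square_integrable_set_integrable_Icc:
  assumes "square_integrable f"
  shows "set_integrable lborel {a..b} f"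
  unfolding set_integrable_def
proof (rule Bochner_Integration.integrable_bound)
  have "integrable lborel (\<lambda>x. indicator {a..b} x * (f x)\<^sup>2 :: real)"
    using integrable_mult_indicator[of "{a..b}" lborel "\<lambda>x. (f x)\<^sup>2"] assms
    by (simp add: square_integrable_def)
  then show "integrable lborel (\<lambda>x. indicator {a..b} x + indicator {a..b} x * (f x)\<^sup>2 :: real)"
    by (simp add: integrable_indicator_iff emeasure_lborel_Icc_eq)
  show "AE x in lborel. norm (indicator {a..b} x *\<^sub>R f x)
      \<le> norm (indicator {a..b} x + indicator {a..b} x * (f x)\<^sup>2 :: real)"
  proof (rule AE_I2)
    fix x
    have "0 \<le> (\<bar>f x\<bar> - 1)\<^sup>2" by simp
    then have "\<bar>f x\<bar> \<le> 1 + (f x)\<^sup>2" by (simp add: power2_eq_square algebra_simps)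
    then show "norm (indicator {a..b} x *\<^sub>R f x) \<le> norm (indicator {a..b} x + indicator {a..b} x * (f x)\<^sup>2 :: real)"
      by (auto simp: indicator_def)
  qed
qed (use square_integrable_measurable[OF assms] in measurable)

lemma integral_square_eq_0_imp_AE_0:
  fixes f :: "'a \<Rightarrow> real"
  assumes "integrable M (\<lambda>x. (f x)\<^sup>2)" and "(\<integral>x. (f x)\<^sup>2 \<partial>M) = 0"
  shows "AE x in M. f x = 0"
  using assms by (subst (asm) integral_nonneg_eq_0_iff_AE) auto

lemma weighted_Cauchy_Schwarz_suminf:
  fixes u w :: "nat \<Rightarrow> real"
  assumes su: "summable (\<lambda>k. \<bar>u k\<bar>)" and sw: "summable w" and w_pos: "\<And>k. 0 < w k"
    and sq: "summable (\<lambda>k. (u k)\<^sup>2 / w k)"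
  shows "(\<Sum>k. \<bar>u k\<bar>)\<^sup>2 \<le> (\<Sum>k. w k) * (\<Sum>k. (u k)\<^sup>2 / w k)"
proof (rule LIMSEQ_le_const2)
  show "(\<lambda>n. (\<Sum>k<n. \<bar>u k\<bar>)\<^sup>2) \<longlonglongrightarrow> (\<Sum>k. \<bar>u k\<bar>)\<^sup>2"
    by (intro tendsto_intros summable_LIMSEQ su)
  have w_nonneg: "0 \<le> w k" and w_nonzero: "w k \<noteq> 0" for k using w_pos[of k] by simp_all
  show "\<exists>N. \<forall>n\<ge>N. (\<Sum>k<n. \<bar>u k\<bar>)\<^sup>2 \<le> (\<Sum>k. w k) * (\<Sum>k. (u k)\<^sup>2 / w k)"
  proof (intro exI allI impI)
    fix n
    have "(\<Sum>k<n. \<bar>u k\<bar>)\<^sup>2 = (\<Sum>k<n. sqrt (w k) * (\<bar>u k\<bar> / sqrt (w k)))\<^sup>2"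
      using w_nonneg w_nonzero by simp
    also have "\<dots> \<le> (\<Sum>k<n. (sqrt (w k))\<^sup>2) * (\<Sum>k<n. (\<bar>u k\<bar> / sqrt (w k))\<^sup>2)"
      by (rule Cauchy_Schwarz_ineq_sum)
    also have "\<dots> = (\<Sum>k<n. w k) * (\<Sum>k<n. (u k)\<^sup>2 / w k)"
      using w_nonneg by (simp add: power_divide)
    also have "\<dots> \<le> (\<Sum>k. w k) * (\<Sum>k. (u k)\<^sup>2 / w k)"
    proof (rule mult_mono)
      show "(\<Sum>k<n. w k) \<le> (\<Sum>k. w k)" "0 \<le> (\<Sum>k. w k)"
        using w_nonneg by (simp_all add: sum_le_suminf[OF sw] suminf_nonneg[OF sw])
      show "(\<Sum>k<n. (u k)\<^sup>2 / w k) \<le> (\<Sum>k. (u k)\<^sup>2 / w k)" "0 \<le> (\<Sum>k<n. (u k)\<^sup>2 / w k)"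
        using w_nonneg by (simp_all add: sum_le_suminf[OF sq] sum_nonneg)
    qed
    finally show "(\<Sum>k<n. \<bar>u k\<bar>)\<^sup>2 \<le> (\<Sum>k. w k) * (\<Sum>k. (u k)\<^sup>2 / w k)" .
  qed
qed

section \<open>The averaging operator\<close>

lemma Aop_eq_integral_indicator:
  "Aop m f \<xi> = (\<integral>s. indicator {\<xi> - real m / 2..\<xi> + real m / 2} s * f s \<partial>lborel)"
  by (simp add: Aop_def set_lebesgue_integral_def)

lemma Aop_nonneg: "(\<And>x. 0 \<le> f x) \<Longrightarrow> 0 \<le> Aop m f \<xi>"
  unfolding Aop_eq_integral_indicator
  by (rule Bochner_Integration.integral_nonneg) (auto simp: indicator_def)

lemma Aop_cong_AE:
  assumes "f \<in> borel_measurable lborel" "g \<in> borel_measurable lborel" "AE x in lborel. f x = g x"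
  shows "Aop m f \<xi> = Aop m g \<xi>"
  unfolding Aop_eq_integral_indicator by (rule integral_cong_AE) (use assms in auto)

lemma Aop_add_const:
  assumes "set_integrable lborel {\<xi> - real m / 2..\<xi> + real m / 2} f"
  shows "Aop m (\<lambda>s. f s + c) \<xi> = Aop m f \<xi> + real m * c"
proof -
  have "Aop m (\<lambda>s. f s + c) \<xi> = Aop m f \<xi> + (LBINT s:{\<xi> - real m / 2..\<xi> + real m / 2}. c)"
    unfolding Aop_def
    by (rule set_integral_add)
      (use assms in \<open>auto simp: set_integrable_def integrable_indicator_iff emeasure_lborel_Icc_eq\<close>)
  then show ?thesis by (simp add: set_lebesgue_integral_def)
qed

definition window_band :: "real \<Rightarrow> (real \<times> real) set" where
  "window_band c = {p. fst p - c \<le> snd p \<and> snd p \<le> fst p + c}"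

lemma window_band_sets [measurable]: "window_band c \<in> sets (lborel \<Otimes>\<^sub>M lborel)"
proof -
  have "Measurable.pred (lborel \<Otimes>\<^sub>M lborel) (\<lambda>p::real \<times> real. fst p - c \<le> snd p \<and> snd p \<le> fst p + c)"
    by measurable
  from predE[OF this] show ?thesis by (simp add: window_band_def space_pair_measure)
qed

lemma indicator_window_band: "indicator {\<xi> - c..\<xi> + c} s = indicator (window_band c) (\<xi>, s)"
  by (auto simp: indicator_def window_band_def)

lemma Aop_measurable [measurable]:
  assumes [measurable]: "f \<in> borel_measurable lborel"
  shows "Aop m f \<in> borel_measurable lborel"
proof -
  have "(\<lambda>\<xi>. \<integral>s. indicator (window_band (real m / 2)) (\<xi>, s) * f s \<partial>lborel) \<in> borel_measurable lborel"
    by (intro lborel.borel_measurable_lebesgue_integral) (simp add: case_prod_beta')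
  moreover have "Aop m f = (\<lambda>\<xi>. \<integral>s. indicator (window_band (real m / 2)) (\<xi>, s) * f s \<partial>lborel)"
    by (simp add: fun_eq_iff Aop_eq_integral_indicator indicator_window_band)
  ultimately show ?thesis by simp
qed

lemma Aop_abs_le:
  assumes [measurable]: "f \<in> borel_measurable lborel" and bound: "\<And>x. \<bar>f x\<bar> \<le> M"
  shows "\<bar>Aop m f \<xi>\<bar> \<le> real m * M"
proof -
  define S where "S = {\<xi> - real m / 2..\<xi> + real m / 2}"
  have iS: "integrable lborel (\<lambda>x. indicator S x * M)"
    by (simp add: S_def integrable_indicator_iff emeasure_lborel_Icc_eq)
  have pointwise: "\<bar>indicator S x * f x\<bar> \<le> indicator S x * M" for x
    using bound[of x] by (cases "x \<in> S") auto
  have iF: "integrable lborel (\<lambda>x. indicator S x * f x)"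
  proof (rule Bochner_Integration.integrable_bound[OF iS])
    show "AE x in lborel. norm (indicator S x * f x) \<le> norm (indicator S x * M)"
      using pointwise by (auto intro!: AE_I2 order_trans[OF _ abs_ge_self])
  qed (simp add: S_def)
  have "\<bar>Aop m f \<xi>\<bar> \<le> (\<integral>x. \<bar>indicator S x * f x\<bar> \<partial>lborel)"
    unfolding Aop_eq_integral_indicator S_def[symmetric] by (rule integral_abs_bound)
  also have "\<dots> \<le> (\<integral>x. indicator S x * M \<partial>lborel)"
    by (rule integral_mono[OF _ iS pointwise]) (use iF in simp)
  also have "\<dots> = real m * M" by (simp add: S_def)
  finally show ?thesis .
qed

lemma
  assumes "square_integrable f"
  shows Aop_square_le_window:
      "(Aop m f \<xi>)\<^sup>2 \<le> real m * (\<integral>s. indicator {\<xi> - real m / 2..\<xi> + real m / 2} s * (f s)\<^sup>2 \<partial>lborel)"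
    and Aop_square_le: "(Aop m f \<xi>)\<^sup>2 \<le> real m * (\<integral>s. (f s)\<^sup>2 \<partial>lborel)"
proof -
  have [measurable]: "f \<in> borel_measurable lborel" and f2: "integrable lborel (\<lambda>x. (f x)\<^sup>2)"
    using assms by (simp_all add: square_integrable_def)
  define S where "S = {\<xi> - real m / 2..\<xi> + real m / 2}"
  have indicator_square: "(indicator S x :: real)\<^sup>2 = indicator S x" for x
    by (simp add: indicator_def)
  have [measurable]: "S \<in> sets lborel" by (simp add: S_def)
  have f2S: "integrable lborel (\<lambda>x. indicator S x * (f x)\<^sup>2)"
    using integrable_mult_indicator[of S lborel "\<lambda>x. (f x)\<^sup>2"] f2 by (simp add: S_def)
  have iS: "integrable lborel (\<lambda>x. indicator S x :: real)"
    by (simp add: S_def integrable_indicator_iff emeasure_lborel_Icc_eq)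
  have "(\<integral>x. (indicator S x * f x) * indicator S x \<partial>lborel)\<^sup>2
        \<le> (\<integral>x. (indicator S x * f x)\<^sup>2 \<partial>lborel) * (\<integral>x. (indicator S x :: real)\<^sup>2 \<partial>lborel)"
  proof (rule Cauchy_Schwarz_integral)
    show "integrable lborel (\<lambda>x. (indicator S x * f x)\<^sup>2)"
      using f2S by (simp add: power_mult_distrib indicator_square)
    show "integrable lborel (\<lambda>x. (indicator S x :: real)\<^sup>2)"
      using iS by (simp add: indicator_square)
  qed simp_all
  also have "(\<integral>x. (indicator S x * f x) * indicator S x \<partial>lborel) = Aop m f \<xi>"
    unfolding Aop_eq_integral_indicator S_def
    by (rule Bochner_Integration.integral_cong) (auto simp: indicator_def)
  also have "(\<integral>x. (indicator S x :: real)\<^sup>2 \<partial>lborel) = real m"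
    unfolding indicator_square by (simp add: S_def)
  also have "(\<integral>x. (indicator S x * f x)\<^sup>2 \<partial>lborel) = (\<integral>s. indicator S s * (f s)\<^sup>2 \<partial>lborel)"
    by (simp add: power_mult_distrib indicator_square)
  finally show window: "(Aop m f \<xi>)\<^sup>2 \<le> real m * (\<integral>s. indicator S s * (f s)\<^sup>2 \<partial>lborel)"
    by (simp add: mult.commute)
  also have "(\<integral>s. indicator S s * (f s)\<^sup>2 \<partial>lborel) \<le> (\<integral>s. (f s)\<^sup>2 \<partial>lborel)"
    by (rule integral_mono[OF f2S f2]) (simp add: indicator_def)
  then have "real m * (\<integral>s. indicator S s * (f s)\<^sup>2 \<partial>lborel) \<le> real m * (\<integral>s. (f s)\<^sup>2 \<partial>lborel)"
    by (simp add: mult_left_mono)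
  finally show "(Aop m f \<xi>)\<^sup>2 \<le> real m * (\<integral>s. (f s)\<^sup>2 \<partial>lborel)" .
qed

lemma nn_integral_window:
  fixes g :: "real \<Rightarrow> ennreal"
  assumes [measurable]: "g \<in> borel_measurable lborel" and "0 \<le> c"
  shows "(\<integral>\<^sup>+\<xi>. (\<integral>\<^sup>+s. indicator {\<xi> - c..\<xi> + c} s * g s \<partial>lborel) \<partial>lborel)
    = ennreal (2 * c) * (\<integral>\<^sup>+s. g s \<partial>lborel)"
proof -
  have "(\<integral>\<^sup>+\<xi>. (\<integral>\<^sup>+s. indicator {\<xi> - c..\<xi> + c} s * g s \<partial>lborel) \<partial>lborel)
      = (\<integral>\<^sup>+s. (\<integral>\<^sup>+\<xi>. indicator (window_band c) (\<xi>, s) * g s \<partial>lborel) \<partial>lborel)"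
    unfolding indicator_window_band
    by (rule lborel_pair.Fubini'[symmetric]) (simp add: case_prod_beta')
  also have "\<dots> = (\<integral>\<^sup>+s. g s * (\<integral>\<^sup>+\<xi>. indicator {s - c..s + c} \<xi> \<partial>lborel) \<partial>lborel)"
  proof (rule nn_integral_cong)
    fix s
    have "(\<integral>\<^sup>+\<xi>. indicator (window_band c) (\<xi>, s) * g s \<partial>lborel)
        = (\<integral>\<^sup>+\<xi>. g s * indicator {s - c..s + c} \<xi> \<partial>lborel)"
      by (rule nn_integral_cong) (auto simp: window_band_def indicator_def)
    then show "(\<integral>\<^sup>+\<xi>. indicator (window_band c) (\<xi>, s) * g s \<partial>lborel)
        = g s * (\<integral>\<^sup>+\<xi>. indicator {s - c..s + c} \<xi> \<partial>lborel)"
      by (simp add: nn_integral_cmult)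
  qed
  also have "\<dots> = ennreal (2 * c) * (\<integral>\<^sup>+s. g s \<partial>lborel)"
    using \<open>0 \<le> c\<close> by (simp add: emeasure_lborel_Icc_eq nn_integral_multc mult.commute)
  finally show ?thesis .
qed

lemma
  assumes "square_integrable f"
  shows square_integrable_Aop: "square_integrable (Aop m f)"
    and integral_Aop_square_le: "(\<integral>\<xi>. (Aop m f \<xi>)\<^sup>2 \<partial>lborel) \<le> (real m)\<^sup>2 * (\<integral>s. (f s)\<^sup>2 \<partial>lborel)"
proof -
  have [measurable]: "f \<in> borel_measurable lborel" and f2: "integrable lborel (\<lambda>x. (f x)\<^sup>2)"
    using assms by (simp_all add: square_integrable_def)
  define c where "c = real m / 2"
  have window_integral: "ennreal (\<integral>s. indicator {\<xi> - c..\<xi> + c} s * (f s)\<^sup>2 \<partial>lborel)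
      = (\<integral>\<^sup>+s. indicator {\<xi> - c..\<xi> + c} s * ennreal ((f s)\<^sup>2) \<partial>lborel)" for \<xi>
  proof -
    have "integrable lborel (\<lambda>s. indicator {\<xi> - c..\<xi> + c} s * (f s)\<^sup>2)"
      using integrable_mult_indicator[of "{\<xi> - c..\<xi> + c}" lborel "\<lambda>s. (f s)\<^sup>2"] f2 by simp
    then have "ennreal (\<integral>s. indicator {\<xi> - c..\<xi> + c} s * (f s)\<^sup>2 \<partial>lborel)
        = (\<integral>\<^sup>+s. ennreal (indicator {\<xi> - c..\<xi> + c} s * (f s)\<^sup>2) \<partial>lborel)"
      by (rule nn_integral_eq_integral[symmetric]) auto
    also have "\<dots> = (\<integral>\<^sup>+s. indicator {\<xi> - c..\<xi> + c} s * ennreal ((f s)\<^sup>2) \<partial>lborel)"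
      by (rule nn_integral_cong) (simp add: indicator_def)
    finally show ?thesis .
  qed
  have pointwise: "ennreal ((Aop m f \<xi>)\<^sup>2)
      \<le> ennreal (real m) * (\<integral>\<^sup>+s. indicator {\<xi> - c..\<xi> + c} s * ennreal ((f s)\<^sup>2) \<partial>lborel)" for \<xi>
  proof -
    have "ennreal ((Aop m f \<xi>)\<^sup>2)
        \<le> ennreal (real m * (\<integral>s. indicator {\<xi> - c..\<xi> + c} s * (f s)\<^sup>2 \<partial>lborel))"
      using Aop_square_le_window[OF assms, of m \<xi>] by (intro ennreal_leI) (simp add: c_def)
    also have "\<dots> = ennreal (real m) * ennreal (\<integral>s. indicator {\<xi> - c..\<xi> + c} s * (f s)\<^sup>2 \<partial>lborel)"
      by (rule ennreal_mult) (auto intro: Bochner_Integration.integral_nonneg)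
    finally show ?thesis by (simp add: window_integral)
  qed
  have bound: "(\<integral>\<^sup>+\<xi>. ennreal ((Aop m f \<xi>)\<^sup>2) \<partial>lborel) \<le> ennreal ((real m)\<^sup>2 * (\<integral>s. (f s)\<^sup>2 \<partial>lborel))"
  proof -
    have [measurable]: "(\<lambda>\<xi>. \<integral>\<^sup>+s. indicator {\<xi> - c..\<xi> + c} s * ennreal ((f s)\<^sup>2) \<partial>lborel)
        \<in> borel_measurable lborel"
      unfolding indicator_window_band
      by (rule lborel.borel_measurable_nn_integral_fst
          [where f = "\<lambda>p. indicator (window_band c) p * ennreal ((f (snd p))\<^sup>2)", simplified]) simp
    have "(\<integral>\<^sup>+\<xi>. ennreal ((Aop m f \<xi>)\<^sup>2) \<partial>lborel)
        \<le> (\<integral>\<^sup>+\<xi>. ennreal (real m) * (\<integral>\<^sup>+s. indicator {\<xi> - c..\<xi> + c} s * ennreal ((f s)\<^sup>2) \<partial>lborel) \<partial>lborel)"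
      by (rule nn_integral_mono) (rule pointwise)
    also have "\<dots> = ennreal (real m)
        * (\<integral>\<^sup>+\<xi>. (\<integral>\<^sup>+s. indicator {\<xi> - c..\<xi> + c} s * ennreal ((f s)\<^sup>2) \<partial>lborel) \<partial>lborel)"
      by (rule nn_integral_cmult) simp
    also have "\<dots> = ennreal (real m) * (ennreal (2 * c) * (\<integral>\<^sup>+s. ennreal ((f s)\<^sup>2) \<partial>lborel))"
      by (subst nn_integral_window) (simp_all add: c_def)
    also have "(\<integral>\<^sup>+s. ennreal ((f s)\<^sup>2) \<partial>lborel) = ennreal (\<integral>s. (f s)\<^sup>2 \<partial>lborel)"
      by (rule nn_integral_eq_integral) (use f2 in auto)
    also have "ennreal (real m) * (ennreal (2 * c) * ennreal (\<integral>s. (f s)\<^sup>2 \<partial>lborel))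
        = ennreal ((real m)\<^sup>2 * (\<integral>s. (f s)\<^sup>2 \<partial>lborel))"
      by (simp add: c_def power2_eq_square ennreal_mult[symmetric] mult.assoc)
    finally show ?thesis .
  qed
  have Aop2: "integrable lborel (\<lambda>\<xi>. (Aop m f \<xi>)\<^sup>2)"
  proof (rule integrableI_bounded)
    show "(\<integral>\<^sup>+\<xi>. ennreal (norm ((Aop m f \<xi>)\<^sup>2)) \<partial>lborel) < \<infinity>"
      using bound by (simp add: le_less_trans)
  qed simp
  then show "square_integrable (Aop m f)" by (simp add: square_integrable_def)
  have "ennreal (\<integral>\<xi>. (Aop m f \<xi>)\<^sup>2 \<partial>lborel) = (\<integral>\<^sup>+\<xi>. ennreal ((Aop m f \<xi>)\<^sup>2) \<partial>lborel)"
    by (rule nn_integral_eq_integral[symmetric]) (use Aop2 in auto)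
  with bound have "ennreal (\<integral>\<xi>. (Aop m f \<xi>)\<^sup>2 \<partial>lborel) \<le> ennreal ((real m)\<^sup>2 * (\<integral>s. (f s)\<^sup>2 \<partial>lborel))"
    by simp
  then show "(\<integral>\<xi>. (Aop m f \<xi>)\<^sup>2 \<partial>lborel) \<le> (real m)\<^sup>2 * (\<integral>s. (f s)\<^sup>2 \<partial>lborel)"
    by (subst (asm) ennreal_le_iff) auto
qed

lemma Aop_adjoint:
  assumes f: "square_integrable f" and g: "square_integrable g"
  shows "(\<integral>\<xi>. Aop m g \<xi> * f \<xi> \<partial>lborel) = (\<integral>s. g s * Aop m f s \<partial>lborel)"
proof -
  have [measurable]: "f \<in> borel_measurable lborel" "g \<in> borel_measurable lborel"
    using f g by (simp_all add: square_integrable_def)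
  define c where "c = real m / 2"
  define F where "F p = indicator (window_band c) p * g (snd p) * f (fst p)" for p :: "real \<times> real"
  have [measurable]: "F \<in> borel_measurable (lborel \<Otimes>\<^sub>M lborel)"
    unfolding F_def[abs_def] by measurable
  have inner_abs: "(\<integral>\<^sup>+s. ennreal (norm (F (\<xi>, s))) \<partial>lborel) = ennreal (\<bar>f \<xi>\<bar> * Aop m (\<lambda>x. \<bar>g x\<bar>) \<xi>)" for \<xi>
  proof -
    have "integrable lborel (\<lambda>s. indicator {\<xi> - c..\<xi> + c} s * \<bar>g s\<bar>)"
      using square_integrable_set_integrable_Icc[OF square_integrable_abs[OF g], of "\<xi> - c" "\<xi> + c"]
      by (simp add: set_integrable_def)
    then have "(\<integral>\<^sup>+s. ennreal (indicator {\<xi> - c..\<xi> + c} s * \<bar>g s\<bar>) \<partial>lborel) = ennreal (Aop m (\<lambda>x. \<bar>g x\<bar>) \<xi>)"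
      unfolding Aop_eq_integral_indicator c_def[symmetric] by (rule nn_integral_eq_integral) auto
    moreover have "(\<integral>\<^sup>+s. ennreal (norm (F (\<xi>, s))) \<partial>lborel)
        = ennreal \<bar>f \<xi>\<bar> * (\<integral>\<^sup>+s. ennreal (indicator {\<xi> - c..\<xi> + c} s * \<bar>g s\<bar>) \<partial>lborel)"
      by (subst nn_integral_cmult[symmetric], simp, rule nn_integral_cong)
        (auto simp: F_def indicator_window_band[symmetric] abs_mult ennreal_mult[symmetric] mult_ac)
    ultimately show ?thesis by (simp add: ennreal_mult[symmetric] Aop_nonneg)
  qed
  have "integrable (lborel \<Otimes>\<^sub>M lborel) F"
  proof (rule integrableI_bounded)
    have "integrable lborel (\<lambda>\<xi>. \<bar>f \<xi>\<bar> * Aop m (\<lambda>x. \<bar>g x\<bar>) \<xi>)"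
      by (rule square_integrable_integrable_mult[OF square_integrable_abs[OF f]
            square_integrable_Aop[OF square_integrable_abs[OF g]]])
    then have finite: "(\<integral>\<^sup>+\<xi>. ennreal (\<bar>f \<xi>\<bar> * Aop m (\<lambda>x. \<bar>g x\<bar>) \<xi>) \<partial>lborel) < \<infinity>"
      by (simp add: integrable_iff_bounded Aop_nonneg)
    have "(\<integral>\<^sup>+p. ennreal (norm (F p)) \<partial>(lborel \<Otimes>\<^sub>M lborel))
        = (\<integral>\<^sup>+\<xi>. (\<integral>\<^sup>+s. ennreal (norm (F (\<xi>, s))) \<partial>lborel) \<partial>lborel)"
      using lborel.nn_integral_fst[of "\<lambda>p. ennreal (norm (F p))" lborel] by simp
    also have "\<dots> = (\<integral>\<^sup>+\<xi>. ennreal (\<bar>f \<xi>\<bar> * Aop m (\<lambda>x. \<bar>g x\<bar>) \<xi>) \<partial>lborel)"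
      by (simp only: inner_abs)
    finally show "(\<integral>\<^sup>+p. ennreal (norm (F p)) \<partial>(lborel \<Otimes>\<^sub>M lborel)) < \<infinity>"
      using finite by simp
  qed simp
  then have "(\<integral>s. (\<integral>\<xi>. F (\<xi>, s) \<partial>lborel) \<partial>lborel) = (\<integral>\<xi>. (\<integral>s. F (\<xi>, s) \<partial>lborel) \<partial>lborel)"
    by (intro lborel_pair.Fubini_integral[where f = "\<lambda>x y. F (x, y)"]) (simp add: case_prod_beta')
  moreover have "(\<integral>s. F (\<xi>, s) \<partial>lborel) = Aop m g \<xi> * f \<xi>" for \<xi>
    by (simp add: F_def Aop_eq_integral_indicator c_def indicator_window_band[symmetric])
  moreover have "(\<integral>\<xi>. F (\<xi>, s) \<partial>lborel) = g s * Aop m f s" for s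
  proof -
    have "(\<integral>\<xi>. F (\<xi>, s) \<partial>lborel) = (\<integral>\<xi>. g s * (indicator {s - c..s + c} \<xi> * f \<xi>) \<partial>lborel)"
      by (rule Bochner_Integration.integral_cong) (auto simp: F_def window_band_def indicator_def)
    then show ?thesis by (simp add: Aop_eq_integral_indicator c_def)
  qed
  ultimately show ?thesis by simp
qed

lemma Aop_eq_0_imp_AE_0:
  assumes f: "square_integrable f" and nonneg: "AE x in lborel. 0 \<le> f x"
    and zero: "AE \<xi> in lborel. Aop m f \<xi> = 0" and "0 < m"
  shows "AE x in lborel. f x = 0"
proof -
  have [measurable]: "f \<in> borel_measurable lborel" using f by (simp add: square_integrable_def)
  define c where "c = real m / 2"
  have window_Aop: "(\<integral>\<^sup>+s. indicator {\<xi> - c..\<xi> + c} s * ennreal (f s) \<partial>lborel) = ennreal (Aop m f \<xi>)" for \<xi>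
  proof -
    have "integrable lborel (\<lambda>s. indicator {\<xi> - c..\<xi> + c} s * f s)"
      using square_integrable_set_integrable_Icc[OF f, of "\<xi> - c" "\<xi> + c"] by (simp add: set_integrable_def)
    then have "ennreal (Aop m f \<xi>) = (\<integral>\<^sup>+s. ennreal (indicator {\<xi> - c..\<xi> + c} s * f s) \<partial>lborel)"
      unfolding Aop_eq_integral_indicator c_def[symmetric]
      by (rule nn_integral_eq_integral[symmetric]) (use nonneg in \<open>auto simp: indicator_def elim!: AE_mp\<close>)
    also have "\<dots> = (\<integral>\<^sup>+s. indicator {\<xi> - c..\<xi> + c} s * ennreal (f s) \<partial>lborel)"
      by (rule nn_integral_cong) (simp add: indicator_def)
    finally show ?thesis ..
  qed
  have "ennreal (2 * c) * (\<integral>\<^sup>+s. ennreal (f s) \<partial>lborel) = (\<integral>\<^sup>+\<xi>. ennreal (Aop m f \<xi>) \<partial>lborel)"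
    unfolding window_Aop[symmetric] by (rule nn_integral_window[symmetric]) (simp_all add: c_def)
  also have "\<dots> = 0"
    using zero by (subst nn_integral_0_iff_AE) (auto elim!: AE_mp)
  finally have "(\<integral>\<^sup>+s. ennreal (f s) \<partial>lborel) = 0"
    using \<open>0 < m\<close> by (simp add: c_def)
  then have "AE x in lborel. ennreal (f x) = 0" by (simp add: nn_integral_0_iff_AE)
  then show ?thesis using nonneg by eventually_elim simp
qed

section \<open>Convexity of a single potential\<close>

text \<open>One summand of \<open>\<P>\<close>: \<open>Ps\<close> is \<open>\<Psi>\<^sub>m\<close> with \<open>a = \<nu> m\<close>, and \<open>b\<close> is an a priori bound for
  the arguments \<open>A\<^sub>m W\<close> at which it is evaluated.\<close>

locale potential_profile =
  fixes P P1 P2 P3 :: "real \<Rightarrow> real" and a b :: real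
  assumes has_real_derivative_P: "\<And>x. 0 < x \<Longrightarrow> (P has_real_derivative P1 x) (at x)"
    and has_real_derivative_P1: "\<And>x. 0 < x \<Longrightarrow> (P1 has_real_derivative P2 x) (at x)"
    and has_real_derivative_P2: "\<And>x. 0 < x \<Longrightarrow> (P2 has_real_derivative P3 x) (at x)"
    and P2_nonneg: "\<And>x. 0 < x \<Longrightarrow> 0 \<le> P2 x"
    and P3_nonpos: "\<And>x. 0 < x \<Longrightarrow> P3 x \<le> 0"
    and b_nonneg: "0 \<le> b" and b_less_a: "b < a"
begin

definition Ps :: "real \<Rightarrow> real" where "Ps r = P (a - r) - P a + P1 a * r"

definition Ps' :: "real \<Rightarrow> real" where "Ps' r = - P1 (a - r) + P1 a"

definition curvature_bound :: real where "curvature_bound = P2 (a - b)"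

lemma P1_mono:
  assumes "0 < x" "x \<le> y"
  shows "P1 x \<le> P1 y"
proof (rule DERIV_nonneg_imp_nondecreasing[OF \<open>x \<le> y\<close>])
  fix t assume "x \<le> t" "t \<le> y"
  then have "0 < t" using assms by simp
  then show "\<exists>d. DERIV P1 t :> d \<and> 0 \<le> d" using has_real_derivative_P1 P2_nonneg by blast
qed

lemma P2_antimono:
  assumes "0 < x" "x \<le> y"
  shows "P2 y \<le> P2 x"
proof (rule deriv_nonpos_imp_antimono[OF _ _ \<open>x \<le> y\<close>])
  fix t assume "t \<in> {x..y}"
  then have "0 < t" using assms by simp
  then show "(P2 has_real_derivative P3 t) (at t)" "P3 t \<le> 0"
    using has_real_derivative_P2 P3_nonpos by blast+
qed

lemma curvature_bound_nonneg: "0 \<le> curvature_bound"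
  unfolding curvature_bound_def using P2_nonneg b_less_a by simp

lemma Ps'_mean_value:
  assumes "\<bar>r\<bar> \<le> b"
  obtains z where "a - b \<le> z" "0 \<le> P2 z" "P2 z \<le> curvature_bound" "Ps' r = r * P2 z"
proof -
  have "0 < x" if "min (a - r) a \<le> x" for x using that assms b_less_a by linarith
  then obtain z where z: "min (a - r) a \<le> z" "z \<le> max (a - r) a"
    "P1 a - P1 (a - r) = (a - (a - r)) * P2 z"
    using MVT_min_max[of "a - r" a P1 P2] has_real_derivative_P1 by blast
  then have "a - b \<le> z" using assms by linarith
  moreover have "0 < a - b" using b_less_a by simp
  moreover have "Ps' r = r * P2 z" using z(3) by (simp add: Ps'_def)
  ultimately show ?thesis
    using that P2_nonneg P2_antimono[of "a - b" z] unfolding curvature_bound_def by simp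
qed

lemma Ps'_sign:
  assumes "\<bar>r\<bar> \<le> b"
  shows "0 \<le> r * Ps' r"
proof -
  obtain z where "0 \<le> P2 z" "Ps' r = r * P2 z" using Ps'_mean_value[OF assms] .
  then show ?thesis by (simp add: mult.assoc[symmetric])
qed

lemma Ps'_sign_strict:
  assumes "\<And>x. 0 < x \<Longrightarrow> 0 < P2 x" and "\<bar>r\<bar> \<le> b" and "r \<noteq> 0"
  shows "0 < r * Ps' r"
proof -
  obtain z where "a - b \<le> z" "Ps' r = r * P2 z" using Ps'_mean_value[OF assms(2)] .
  moreover have "0 < P2 z" using \<open>a - b \<le> z\<close> b_less_a assms(1) by simp
  moreover have "0 < r * r" using \<open>r \<noteq> 0\<close> not_real_square_gt_zero by blast
  ultimately show ?thesis by (simp add: mult.assoc[symmetric])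
qed

lemma Ps'_abs_le:
  assumes "\<bar>r\<bar> \<le> b"
  shows "\<bar>Ps' r\<bar> \<le> curvature_bound * \<bar>r\<bar>"
proof -
  obtain z where "0 \<le> P2 z" "P2 z \<le> curvature_bound" "Ps' r = r * P2 z"
    using Ps'_mean_value[OF assms] .
  then show ?thesis by (simp add: abs_mult mult.commute mult_left_mono)
qed

lemma Ps'_mono: "\<bar>x\<bar> \<le> b \<Longrightarrow> \<bar>y\<bar> \<le> b \<Longrightarrow> x \<le> y \<Longrightarrow> Ps' x \<le> Ps' y"
  using P1_mono[of "a - y" "a - x"] b_less_a by (simp add: Ps'_def)

lemma has_real_derivative_Ps:
  assumes "\<bar>r\<bar> \<le> b"
  shows "(Ps has_real_derivative Ps' r) (at r)"
proof -
  have "0 < a - r" using assms b_less_a by simp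
  have "((\<lambda>r. a - r) has_real_derivative -1) (at r)"
    by (auto intro!: derivative_eq_intros)
  from DERIV_chain2[OF has_real_derivative_P[OF \<open>0 < a - r\<close>] this]
  have "((\<lambda>r. P (a - r) - P a + P1 a * r) has_real_derivative P1 (a - r) * (-1) - 0 + P1 a * 1) (at r)"
    by (rule DERIV_add[OF DERIV_diff[OF _ DERIV_const] DERIV_cmult[OF DERIV_ident]])
  then show ?thesis by (simp add: Ps_def[abs_def] Ps'_def)
qed

lemma Ps_above_tangent:
  assumes "\<bar>r\<bar> \<le> b" "\<bar>t\<bar> \<le> b"
  shows "Ps r + Ps' r * (t - r) \<le> Ps t"
proof -
  have "\<bar>x\<bar> \<le> b" if "min r t \<le> x" "x \<le> max r t" for x using that assms by linarith
  then obtain z where z: "min r t \<le> z" "z \<le> max r t" "Ps t - Ps r = (t - r) * Ps' z"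
    using MVT_min_max[of r t Ps Ps'] has_real_derivative_Ps by blast
  have "\<bar>z\<bar> \<le> b" using z assms by linarith
  have "0 \<le> (t - r) * (Ps' z - Ps' r)"
  proof (cases "r \<le> t")
    case True
    then show ?thesis using z Ps'_mono[OF assms(1) \<open>\<bar>z\<bar> \<le> b\<close>] by simp
  next
    case False
    then show ?thesis using z Ps'_mono[OF \<open>\<bar>z\<bar> \<le> b\<close> assms(1)] by (simp add: mult_nonpos_nonpos)
  qed
  then show ?thesis using z(3) by (simp add: algebra_simps)
qed

lemma Ps_nonneg: "\<bar>r\<bar> \<le> b \<Longrightarrow> 0 \<le> Ps r"
  using Ps_above_tangent[of 0 r] b_nonneg by (simp add: Ps_def Ps'_def)

lemma Ps_le_square:
  assumes "\<bar>r\<bar> \<le> b"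
  shows "Ps r \<le> curvature_bound * r\<^sup>2"
proof -
  have "\<bar>x\<bar> \<le> b" if "min 0 r \<le> x" "x \<le> max 0 r" for x using that assms by linarith
  then obtain z where z: "min 0 r \<le> z" "z \<le> max 0 r" "Ps r - Ps 0 = (r - 0) * Ps' z"
    using MVT_min_max[of 0 r Ps Ps'] has_real_derivative_Ps by blast
  have "\<bar>z\<bar> \<le> b" using z assms by linarith
  then obtain w where w: "0 \<le> P2 w" "P2 w \<le> curvature_bound" "Ps' z = z * P2 w"
    using Ps'_mean_value by blast
  have "0 \<le> r * z \<and> r * z \<le> r\<^sup>2"
  proof (cases "0 \<le> r")
    case True
    then show ?thesis using z by (simp add: power2_eq_square mult_left_mono)
  next
    case False
    then show ?thesis using z by (simp add: power2_eq_square mult_left_mono_neg mult_nonpos_nonpos)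
  qed
  moreover have "Ps r = P2 w * (r * z)" using z(3) w(3) by (simp add: Ps_def algebra_simps)
  ultimately show ?thesis
    using w curvature_bound_nonneg mult_mono[of "P2 w" curvature_bound "r * z" "r\<^sup>2"] by simp
qed

end

section \<open>The admissible class\<close>

lemma C0_nonneg:
  assumes "f \<in> C0"
  shows "0 \<le> f x"
proof -
  have even_nonneg: "\<forall>x\<ge>0. f x = f (-x) \<and> 0 \<le> f x" using assms unfolding C0_def by blast
  show ?thesis
  proof (cases "0 \<le> x")
    case False
    then have "f (-x) = f x \<and> 0 \<le> f (-x)" using even_nonneg[rule_format, of "-x"] by simp
    then show ?thesis by simp
  qed (use even_nonneg in blast)
qed

lemma square_integrable_C0: "f \<in> C0 \<Longrightarrow> square_integrable f"
proof -
  assume "f \<in> C0"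
  then obtain D R where D0: "D 0 = f" and D: "\<And>k x. (D k has_real_derivative D (Suc k) x) (at x)"
    and R: "\<And>x. \<bar>x\<bar> > R \<Longrightarrow> f x = 0"
    unfolding C0_def by blast
  have continuous: "continuous_on UNIV f"
    using DERIV_isCont[OF D[of 0]] D0 by (simp add: continuous_at_imp_continuous_on)
  then have [measurable]: "f \<in> borel_measurable lborel"
    by (simp add: borel_measurable_continuous_onI)
  have "compact (f ` {-R..R})"
    by (rule compact_continuous_image[OF continuous_on_subset[OF continuous] compact_Icc]) simp
  then have "bounded (f ` {-R..R})" by (rule compact_imp_bounded)
  then obtain B where "\<forall>y\<in>f ` {-R..R}. norm y \<le> B" unfolding bounded_iff by blast
  then have B: "\<And>x. x \<in> {-R..R} \<Longrightarrow> \<bar>f x\<bar> \<le> B" by simp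
  have "integrable lborel (\<lambda>x. (f x)\<^sup>2)"
  proof (rule Bochner_Integration.integrable_bound)
    show "integrable lborel (\<lambda>x. indicator {-R..R} x * B\<^sup>2 :: real)"
      by (simp add: integrable_indicator_iff emeasure_lborel_Icc_eq)
    show "AE x in lborel. norm ((f x)\<^sup>2) \<le> norm (indicator {-R..R} x * B\<^sup>2 :: real)"
    proof (rule AE_I2)
      fix x
      show "norm ((f x)\<^sup>2) \<le> norm (indicator {-R..R} x * B\<^sup>2 :: real)"
      proof (cases "x \<in> {-R..R}")
        case True
        then have "(f x)\<^sup>2 \<le> B\<^sup>2" using B by (metis abs_ge_zero power2_abs power_mono)
        then show ?thesis using True by simp
      qed (use R in auto)
    qed
  qed simp
  then show ?thesis by (simp add: square_integrable_def)
qed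

text \<open>Where \<open>W < 0\<close>, \<open>\<bar>f\<^sub>n - W\<bar> \<ge> \<bar>W\<bar>\<close> because \<open>f\<^sub>n \<ge> 0\<close>; so the negative part of \<open>W\<close> has
  \<open>L\<^sup>2\<close>-norm at most \<open>\<parallel>f\<^sub>n - W\<parallel> \<longrightarrow> 0\<close>.\<close>

lemma Ccl_AE_nonneg:
  assumes "W \<in> Ccl"
  shows "AE x in lborel. 0 \<le> W x"
proof -
  obtain f where f: "\<And>n. f n \<in> C0" and lim: "(\<lambda>n. \<integral>x. (f n x - W x)\<^sup>2 \<partial>lborel) \<longlonglongrightarrow> 0"
    and W: "square_integrable W"
    using assms unfolding Ccl_def by blast
  have [measurable]: "W \<in> borel_measurable lborel" and W2: "integrable lborel (\<lambda>x. (W x)\<^sup>2)"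
    using W by (simp_all add: square_integrable_def)
  define Q where "Q = (\<integral>x. indicator {x. W x < 0} x * (W x)\<^sup>2 \<partial>lborel)"
  have Q_integrable: "integrable lborel (\<lambda>x. indicator {x. W x < 0} x * (W x)\<^sup>2)"
    using integrable_mult_indicator[of "{x. W x < 0}" lborel "\<lambda>x. (W x)\<^sup>2"] W2 by simp
  have "Q \<le> (\<integral>x. (f n x - W x)\<^sup>2 \<partial>lborel)" for n
    unfolding Q_def
  proof (rule integral_mono[OF Q_integrable])
    show "integrable lborel (\<lambda>x. (f n x - W x)\<^sup>2)"
      using square_integrable_diff[OF square_integrable_C0[OF f] W] by (simp add: square_integrable_def)
    fix x
    have "0 \<le> f n x" by (rule C0_nonneg[OF f])
    then have "W x < 0 \<Longrightarrow> (W x)\<^sup>2 \<le> (f n x - W x)\<^sup>2"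
      by (simp add: abs_le_square_iff[symmetric])
    then show "indicator {x. W x < 0} x * (W x)\<^sup>2 \<le> (f n x - W x)\<^sup>2"
      by (simp add: indicator_def)
  qed
  then have "Q \<le> 0" by (intro LIMSEQ_le_const[OF lim]) auto
  moreover have "0 \<le> Q" unfolding Q_def by (rule Bochner_Integration.integral_nonneg) auto
  ultimately have "Q = 0" by simp
  then have "AE x in lborel. indicator {x. W x < 0} x * (W x)\<^sup>2 = 0"
    unfolding Q_def by (subst (asm) integral_nonneg_eq_0_iff_AE[OF Q_integrable]) auto
  then show ?thesis by eventually_elim (auto simp: indicator_def split: if_splits)
qed

section \<open>The functional and its gradient on the sphere\<close>

locale potential_family =
  fixes \<Phi> \<Phi>1 \<Phi>2 \<Phi>3 :: "nat \<Rightarrow> real \<Rightarrow> real" and \<nu> K :: real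
  assumes \<nu>_pos: "0 < \<nu>" and K_pos: "0 < K" and K_less: "K < \<nu>\<^sup>2 / 2"
    and has_real_derivative_\<Phi>: "\<And>m x. 0 < x \<Longrightarrow> (\<Phi> m has_real_derivative \<Phi>1 m x) (at x)"
    and has_real_derivative_\<Phi>1: "\<And>m x. 0 < x \<Longrightarrow> (\<Phi>1 m has_real_derivative \<Phi>2 m x) (at x)"
    and has_real_derivative_\<Phi>2: "\<And>m x. 0 < x \<Longrightarrow> (\<Phi>2 m has_real_derivative \<Phi>3 m x) (at x)"
    and \<Phi>_signs: "\<And>m x. 1 \<le> m \<Longrightarrow> 0 \<le> x \<Longrightarrow> \<Phi>1 m x \<le> 0 \<and> 0 \<le> \<Phi>2 m x \<and> \<Phi>3 m x \<le> 0"
    and \<Phi>2_1_pos: "\<And>x. 0 < x \<Longrightarrow> 0 < \<Phi>2 1 x"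
    and summable_\<Phi>1: "summable (\<lambda>m. \<Phi>1 (Suc m) (\<nu> * real (Suc m) - sqrt (2 * K * real (Suc m))) * real (Suc m))"
    and summable_\<Phi>2: "summable (\<lambda>m. \<Phi>2 (Suc m) (\<nu> * real (Suc m) - sqrt (2 * K * real (Suc m))) * (real (Suc m))\<^sup>2)"
begin

text \<open>The series are indexed from \<open>k = 0\<close>, the \<open>k\<close>-th summand belonging to \<open>m = Suc k\<close>.\<close>

definition on_sphere :: "(real \<Rightarrow> real) \<Rightarrow> bool" where
  "on_sphere f \<longleftrightarrow> square_integrable f \<and> (\<integral>x. (f x)\<^sup>2 \<partial>lborel) = 2 * K"

definition radius :: real where "radius = sqrt (2 * K)"

definition avg_bound :: "nat \<Rightarrow> real" where "avg_bound k = sqrt (2 * K * real (Suc k))"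

definition curvature :: "nat \<Rightarrow> real" where
  "curvature k = \<Phi>2 (Suc k) (\<nu> * real (Suc k) - avg_bound k)"

definition term_bound :: "nat \<Rightarrow> real" where
  "term_bound k = curvature k * (real (Suc k))\<^sup>2 * radius"

definition dPsi :: "nat \<Rightarrow> (real \<Rightarrow> real) \<Rightarrow> real \<Rightarrow> real" where
  "dPsi k f s = Psi' \<Phi>1 \<nu> (Suc k) (Aop (Suc k) f s)"

definition dP_term :: "nat \<Rightarrow> (real \<Rightarrow> real) \<Rightarrow> real \<Rightarrow> real" where
  "dP_term k f = Aop (Suc k) (dPsi k f)"

lemma radius_pos: "0 < radius" and radius_square: "radius\<^sup>2 = 2 * K"
  using K_pos by (simp_all add: radius_def)

lemma avg_bound_nonneg: "0 \<le> avg_bound k" and avg_bound_square: "(avg_bound k)\<^sup>2 = 2 * K * real (Suc k)"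
  using K_pos by (simp_all add: avg_bound_def)

lemma avg_bound_less: "avg_bound k < \<nu> * real (Suc k)"
proof -
  have "2 * K * real (Suc k) < \<nu>\<^sup>2 * real (Suc k)" using K_less by simp
  also have "\<dots> \<le> \<nu>\<^sup>2 * (real (Suc k))\<^sup>2"
    by (intro mult_left_mono) (auto simp: power2_eq_square)
  also have "\<dots> = (\<nu> * real (Suc k))\<^sup>2" by (simp add: power_mult_distrib)
  finally show ?thesis unfolding avg_bound_def using \<nu>_pos by (intro real_less_lsqrt) auto
qed

lemma avg_bound_le: "avg_bound k \<le> real (Suc k) * radius"
proof -
  have "sqrt (real (Suc k)) \<le> real (Suc k)" by (intro real_le_lsqrt) (auto simp: power2_eq_square)
  then have "sqrt (real (Suc k)) * radius \<le> real (Suc k) * radius"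
    using radius_pos by (simp add: mult_right_mono)
  then show ?thesis by (simp add: avg_bound_def radius_def real_sqrt_mult mult.commute)
qed

lemma potential_profile_Suc:
  "potential_profile (\<Phi> (Suc k)) (\<Phi>1 (Suc k)) (\<Phi>2 (Suc k)) (\<Phi>3 (Suc k)) (\<nu> * real (Suc k)) (avg_bound k)"
  by unfold_locales
    (use has_real_derivative_\<Phi> has_real_derivative_\<Phi>1 has_real_derivative_\<Phi>2 \<Phi>_signs
      avg_bound_nonneg avg_bound_less in auto)

lemma Psi_eq_Ps: "Psi \<Phi> \<Phi>1 \<nu> (Suc k) = potential_profile.Ps (\<Phi> (Suc k)) (\<Phi>1 (Suc k)) (\<nu> * real (Suc k))"
  by (simp add: fun_eq_iff Psi_def potential_profile.Ps_def[OF potential_profile_Suc] del: of_nat_Suc)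

lemma Psi'_eq_Ps': "Psi' \<Phi>1 \<nu> (Suc k) = potential_profile.Ps' (\<Phi>1 (Suc k)) (\<nu> * real (Suc k))"
  by (simp add: fun_eq_iff Psi'_def potential_profile.Ps'_def[OF potential_profile_Suc] del: of_nat_Suc)

lemma curvature_eq: "curvature k = potential_profile.curvature_bound (\<Phi>2 (Suc k)) (\<nu> * real (Suc k)) (avg_bound k)"
  by (simp add: curvature_def potential_profile.curvature_bound_def[OF potential_profile_Suc] del: of_nat_Suc)

lemma curvature_nonneg: "0 \<le> curvature k"
  unfolding curvature_eq by (rule potential_profile.curvature_bound_nonneg[OF potential_profile_Suc])

lemma term_bound_nonneg: "0 \<le> term_bound k"
  unfolding term_bound_def using curvature_nonneg radius_pos by simp

lemma term_bound_mult_radius: "term_bound k * radius = curvature k * ((real (Suc k))\<^sup>2 * (2 * K))"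
proof -
  have "term_bound k * radius = curvature k * ((real (Suc k))\<^sup>2 * radius\<^sup>2)"
    by (simp add: term_bound_def power2_eq_square)
  then show ?thesis by (simp add: radius_square)
qed

lemma summable_term_bound: "summable term_bound"
  unfolding term_bound_def[abs_def]
  by (rule summable_mult2) (use summable_\<Phi>2 in \<open>simp add: curvature_def avg_bound_def\<close>)

lemma on_sphereD: "on_sphere f \<Longrightarrow> square_integrable f" "on_sphere f \<Longrightarrow> (\<integral>x. (f x)\<^sup>2 \<partial>lborel) = 2 * K"
  by (simp_all add: on_sphere_def)

lemma Aop_abs_le_avg_bound:
  assumes "on_sphere f"
  shows "\<bar>Aop (Suc k) f s\<bar> \<le> avg_bound k"
proof -
  have "(Aop (Suc k) f s)\<^sup>2 \<le> (avg_bound k)\<^sup>2"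
    using Aop_square_le[OF on_sphereD(1)[OF assms], of "Suc k" s] on_sphereD(2)[OF assms]
    by (simp add: avg_bound_square mult_ac)
  then have "\<bar>Aop (Suc k) f s\<bar> \<le> \<bar>avg_bound k\<bar>" by (simp add: abs_le_square_iff)
  then show ?thesis using avg_bound_nonneg[of k] by simp
qed

lemma \<Phi>_argument_pos: "on_sphere f \<Longrightarrow> 0 < \<nu> * real (Suc k) - Aop (Suc k) f s"
  using Aop_abs_le_avg_bound[of f k s] avg_bound_less[of k] by linarith

lemma continuous_on_\<Phi>: "continuous_on {0<..} (\<Phi> m)"
  and continuous_on_\<Phi>1: "continuous_on {0<..} (\<Phi>1 m)"
  by (auto intro!: continuous_at_imp_continuous_on DERIV_isCont
      has_real_derivative_\<Phi> has_real_derivative_\<Phi>1)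

lemma dPsi_measurable [measurable]:
  assumes "on_sphere f"
  shows "dPsi k f \<in> borel_measurable lborel"
proof -
  have [measurable]: "f \<in> borel_measurable lborel"
    using on_sphereD(1)[OF assms] by (rule square_integrable_measurable)
  have "(\<lambda>s. \<Phi>1 (Suc k) (\<nu> * real (Suc k) - Aop (Suc k) f s)) \<in> borel_measurable lborel"
    by (rule borel_measurable_continuous_on_comp[OF _ continuous_on_\<Phi>1])
      (use \<Phi>_argument_pos[OF assms] in simp_all)
  then show ?thesis unfolding dPsi_def[abs_def] Psi'_def by measurable
qed

lemma Psi_Aop_measurable [measurable]:
  assumes "on_sphere f"
  shows "(\<lambda>s. Psi \<Phi> \<Phi>1 \<nu> (Suc k) (Aop (Suc k) f s)) \<in> borel_measurable lborel"
proof -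
  have [measurable]: "f \<in> borel_measurable lborel"
    using on_sphereD(1)[OF assms] by (rule square_integrable_measurable)
  have "(\<lambda>s. \<Phi> (Suc k) (\<nu> * real (Suc k) - Aop (Suc k) f s)) \<in> borel_measurable lborel"
    by (rule borel_measurable_continuous_on_comp[OF _ continuous_on_\<Phi>])
      (use \<Phi>_argument_pos[OF assms] in simp_all)
  then show ?thesis unfolding Psi_def by measurable
qed

lemma dPsi_abs_le: "on_sphere f \<Longrightarrow> \<bar>dPsi k f s\<bar> \<le> curvature k * \<bar>Aop (Suc k) f s\<bar>"
  unfolding dPsi_def Psi'_eq_Ps' curvature_eq
  by (rule potential_profile.Ps'_abs_le[OF potential_profile_Suc Aop_abs_le_avg_bound])

lemma Aop_mult_dPsi_nonneg: "on_sphere f \<Longrightarrow> 0 \<le> Aop (Suc k) f s * dPsi k f s"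
  unfolding dPsi_def Psi'_eq_Ps'
  by (rule potential_profile.Ps'_sign[OF potential_profile_Suc Aop_abs_le_avg_bound])

lemma Psi_Aop_nonneg: "on_sphere f \<Longrightarrow> 0 \<le> Psi \<Phi> \<Phi>1 \<nu> (Suc k) (Aop (Suc k) f s)"
  unfolding Psi_eq_Ps
  by (rule potential_profile.Ps_nonneg[OF potential_profile_Suc Aop_abs_le_avg_bound])

lemma Psi_Aop_le: "on_sphere f \<Longrightarrow> Psi \<Phi> \<Phi>1 \<nu> (Suc k) (Aop (Suc k) f s) \<le> curvature k * (Aop (Suc k) f s)\<^sup>2"
  unfolding Psi_eq_Ps curvature_eq
  by (rule potential_profile.Ps_le_square[OF potential_profile_Suc Aop_abs_le_avg_bound])

lemma Psi_Aop_above_tangent: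
  assumes "on_sphere f" "on_sphere g"
  shows "Psi \<Phi> \<Phi>1 \<nu> (Suc k) (Aop (Suc k) f s) + dPsi k f s * (Aop (Suc k) g s - Aop (Suc k) f s)
    \<le> Psi \<Phi> \<Phi>1 \<nu> (Suc k) (Aop (Suc k) g s)"
  unfolding Psi_eq_Ps dPsi_def Psi'_eq_Ps'
  by (rule potential_profile.Ps_above_tangent[OF potential_profile_Suc
        Aop_abs_le_avg_bound[OF assms(1)] Aop_abs_le_avg_bound[OF assms(2)]])

lemma
  assumes "on_sphere f"
  shows square_integrable_dPsi: "square_integrable (dPsi k f)"
    and integral_dPsi_square_le:
      "(\<integral>s. (dPsi k f s)\<^sup>2 \<partial>lborel) \<le> (curvature k)\<^sup>2 * ((real (Suc k))\<^sup>2 * (2 * K))"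
proof -
  have f: "square_integrable f" by (rule on_sphereD(1)[OF assms])
  have A2: "integrable lborel (\<lambda>s. (Aop (Suc k) f s)\<^sup>2)"
    using square_integrable_Aop[OF f] by (rule square_integrable_integrable)
  have pointwise: "(dPsi k f s)\<^sup>2 \<le> (curvature k)\<^sup>2 * (Aop (Suc k) f s)\<^sup>2" for s
  proof -
    have "\<bar>dPsi k f s\<bar> \<le> \<bar>curvature k * Aop (Suc k) f s\<bar>"
      using dPsi_abs_le[OF assms, of k s] curvature_nonneg[of k] by (simp add: abs_mult)
    then show ?thesis by (simp add: abs_le_square_iff power_mult_distrib)
  qed
  have dPsi2: "integrable lborel (\<lambda>s. (dPsi k f s)\<^sup>2)"
  proof (rule Bochner_Integration.integrable_bound)
    show "integrable lborel (\<lambda>s. (curvature k)\<^sup>2 * (Aop (Suc k) f s)\<^sup>2)" using A2 by simp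
    show "AE s in lborel. norm ((dPsi k f s)\<^sup>2) \<le> norm ((curvature k)\<^sup>2 * (Aop (Suc k) f s)\<^sup>2)"
      using pointwise by (simp add: AE_I2)
  qed (use assms in measurable)
  then show "square_integrable (dPsi k f)"
    using dPsi_measurable[OF assms] by (simp add: square_integrable_def)
  have "(\<integral>s. (dPsi k f s)\<^sup>2 \<partial>lborel) \<le> (\<integral>s. (curvature k)\<^sup>2 * (Aop (Suc k) f s)\<^sup>2 \<partial>lborel)"
    using dPsi2 A2 pointwise by (intro integral_mono) simp_all
  also have "\<dots> \<le> (curvature k)\<^sup>2 * ((real (Suc k))\<^sup>2 * (2 * K))"
    using integral_Aop_square_le[OF f, of "Suc k"] on_sphereD(2)[OF assms] by (simp add: mult_left_mono)
  finally show "(\<integral>s. (dPsi k f s)\<^sup>2 \<partial>lborel) \<le> (curvature k)\<^sup>2 * ((real (Suc k))\<^sup>2 * (2 * K))" .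
qed

lemma
  assumes "on_sphere f"
  shows square_integrable_dP_term: "square_integrable (dP_term k f)"
    and integral_dP_term_square_le: "(\<integral>s. (dP_term k f s)\<^sup>2 \<partial>lborel) \<le> (term_bound k)\<^sup>2"
proof -
  show "square_integrable (dP_term k f)"
    unfolding dP_term_def by (rule square_integrable_Aop[OF square_integrable_dPsi[OF assms]])
  have "(\<integral>s. (dP_term k f s)\<^sup>2 \<partial>lborel) \<le> (real (Suc k))\<^sup>2 * (\<integral>s. (dPsi k f s)\<^sup>2 \<partial>lborel)"
    unfolding dP_term_def by (rule integral_Aop_square_le[OF square_integrable_dPsi[OF assms]])
  also have "\<dots> \<le> (real (Suc k))\<^sup>2 * ((curvature k)\<^sup>2 * ((real (Suc k))\<^sup>2 * (2 * K)))"
    by (intro mult_left_mono integral_dPsi_square_le[OF assms]) simp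
  also have "\<dots> = (term_bound k)\<^sup>2"
    using term_bound_mult_radius[of k] by (simp add: term_bound_def power_mult_distrib radius_square)
  finally show "(\<integral>s. (dP_term k f s)\<^sup>2 \<partial>lborel) \<le> (term_bound k)\<^sup>2" .
qed

lemma dP_term_abs_le:
  assumes "on_sphere f"
  shows "\<bar>dP_term k f \<xi>\<bar> \<le> term_bound k"
proof -
  have "\<bar>dPsi k f s\<bar> \<le> curvature k * avg_bound k" for s
    using dPsi_abs_le[OF assms, of k s] Aop_abs_le_avg_bound[OF assms, of k s] curvature_nonneg[of k]
    by (meson mult_left_mono order_trans)
  then have "\<bar>dP_term k f \<xi>\<bar> \<le> real (Suc k) * (curvature k * avg_bound k)"
    unfolding dP_term_def using assms by (intro Aop_abs_le) simp_all
  also have "\<dots> \<le> real (Suc k) * (curvature k * (real (Suc k) * radius))"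
    using avg_bound_le[of k] curvature_nonneg[of k] by (simp add: mult_left_mono)
  also have "\<dots> = term_bound k" by (simp add: term_bound_def power2_eq_square)
  finally show ?thesis .
qed

lemma dP_eq_suminf_dP_term: "dP \<Phi>1 \<nu> f \<xi> = (\<Sum>k. dP_term k f \<xi>)"
  by (simp add: dP_def dP_term_def dPsi_def[abs_def])

lemma summable_abs_dP_term: "on_sphere f \<Longrightarrow> summable (\<lambda>k. \<bar>dP_term k f \<xi>\<bar>)"
  by (rule summable_comparison_test'[OF summable_term_bound, of 0]) (simp add: dP_term_abs_le)

lemma summable_dP_term: "on_sphere f \<Longrightarrow> summable (\<lambda>k. dP_term k f \<xi>)"
  by (rule summable_rabs_cancel[OF summable_abs_dP_term])

lemma dP_measurable [measurable]:
  assumes "on_sphere f"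
  shows "dP \<Phi>1 \<nu> f \<in> borel_measurable lborel"
proof -
  have [measurable]: "dP_term k f \<in> borel_measurable lborel" for k
    unfolding dP_term_def using assms by measurable
  have "(\<lambda>\<xi>. \<Sum>k. dP_term k f \<xi>) \<in> borel_measurable lborel" by measurable
  then show ?thesis by (simp add: dP_eq_suminf_dP_term[abs_def])
qed


text \<open>Weighted Cauchy--Schwarz with weights \<open>term_bound k + 2\<^sup>-\<^sup>k\<close>: the shift keeps the weights positive
  without spoiling their summability.\<close>

lemma square_integrable_dP:
  assumes "on_sphere f"
  shows "square_integrable (dP \<Phi>1 \<nu> f)"
proof -
  have [measurable]: "dP_term k f \<in> borel_measurable lborel" for k
    using square_integrable_dP_term[OF assms] by (rule square_integrable_measurable)
  define w where "w k = term_bound k + (1 / 2) ^ k" for k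
  have w_pos: "0 < w k" for k unfolding w_def using term_bound_nonneg[of k] by (simp add: add_nonneg_pos)
  have term_bound_le_w: "term_bound k \<le> w k" for k unfolding w_def by simp
  have summable_w: "summable w"
    unfolding w_def[abs_def] by (intro summable_add summable_term_bound summable_geometric) simp
  have square_div_le: "y / w k \<le> term_bound k" if "y \<le> (term_bound k)\<^sup>2" for y k
  proof -
    have "y \<le> term_bound k * w k"
      using that term_bound_le_w[of k] term_bound_nonneg[of k]
      by (simp add: power2_eq_square order_trans[OF _ mult_left_mono])
    then show ?thesis using w_pos[of k] by (simp add: divide_le_eq)
  qed
  have pointwise_le: "(dP_term k f \<xi>)\<^sup>2 / w k \<le> term_bound k" for k \<xi>
    using dP_term_abs_le[OF assms, of k \<xi>] term_bound_nonneg[of k]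
    by (intro square_div_le) (simp add: abs_le_square_iff[symmetric])
  have summable_weighted: "summable (\<lambda>k. (dP_term k f \<xi>)\<^sup>2 / w k)" for \<xi>
    using pointwise_le w_pos
    by (intro summable_comparison_test'[OF summable_term_bound, of 0]) (simp add: less_imp_le)
  have integrable_weighted: "integrable lborel (\<lambda>\<xi>. \<Sum>k. (dP_term k f \<xi>)\<^sup>2 / w k)"
  proof (rule integrable_suminf)
    show "integrable lborel (\<lambda>\<xi>. (dP_term k f \<xi>)\<^sup>2 / w k)" for k
      using square_integrable_integrable[OF square_integrable_dP_term[OF assms]] by simp
    show "AE \<xi> in lborel. summable (\<lambda>k. norm ((dP_term k f \<xi>)\<^sup>2 / w k))"
      using summable_weighted w_pos by (simp add: less_imp_le)
    show "summable (\<lambda>k. \<integral>\<xi>. norm ((dP_term k f \<xi>)\<^sup>2 / w k) \<partial>lborel)"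
    proof (rule summable_comparison_test'[OF summable_term_bound, of 0])
      fix k
      have "(\<integral>\<xi>. norm ((dP_term k f \<xi>)\<^sup>2 / w k) \<partial>lborel) = (\<integral>\<xi>. (dP_term k f \<xi>)\<^sup>2 \<partial>lborel) / w k"
        using w_pos[of k] by (simp add: less_imp_le)
      also have "\<dots> \<le> term_bound k"
        by (rule square_div_le[OF integral_dP_term_square_le[OF assms]])
      finally show "norm (\<integral>\<xi>. norm ((dP_term k f \<xi>)\<^sup>2 / w k) \<partial>lborel) \<le> term_bound k" by simp
    qed
  qed
  have pointwise: "(dP \<Phi>1 \<nu> f \<xi>)\<^sup>2 \<le> (\<Sum>k. w k) * (\<Sum>k. (dP_term k f \<xi>)\<^sup>2 / w k)" for \<xi>
  proof -
    have "\<bar>dP \<Phi>1 \<nu> f \<xi>\<bar> \<le> (\<Sum>k. \<bar>dP_term k f \<xi>\<bar>)"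
      unfolding dP_eq_suminf_dP_term by (rule summable_rabs[OF summable_abs_dP_term[OF assms]])
    then have "(dP \<Phi>1 \<nu> f \<xi>)\<^sup>2 \<le> (\<Sum>k. \<bar>dP_term k f \<xi>\<bar>)\<^sup>2"
      by (metis abs_ge_zero power2_abs power_mono)
    also have "\<dots> \<le> (\<Sum>k. w k) * (\<Sum>k. (dP_term k f \<xi>)\<^sup>2 / w k)"
      by (rule weighted_Cauchy_Schwarz_suminf[OF summable_abs_dP_term[OF assms] summable_w w_pos
            summable_weighted])
    finally show ?thesis .
  qed
  have "integrable lborel (\<lambda>\<xi>. (dP \<Phi>1 \<nu> f \<xi>)\<^sup>2)"
  proof (rule Bochner_Integration.integrable_bound)
    show "integrable lborel (\<lambda>\<xi>. (\<Sum>k. w k) * (\<Sum>k. (dP_term k f \<xi>)\<^sup>2 / w k))"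
      using integrable_weighted by simp
    show "AE \<xi> in lborel. norm ((dP \<Phi>1 \<nu> f \<xi>)\<^sup>2) \<le> norm ((\<Sum>k. w k) * (\<Sum>k. (dP_term k f \<xi>)\<^sup>2 / w k))"
      using pointwise by (simp add: AE_I2 order_trans[OF _ abs_ge_self])
  qed (use assms in measurable)
  then show ?thesis using dP_measurable[OF assms] by (simp add: square_integrable_def)
qed

text \<open>\<open>\<partial>\<P>\<close> is the \<open>L\<^sup>2\<close>-gradient of \<open>\<P>\<close>: pairing it with \<open>h\<close> moves each \<open>A\<^sub>m\<close> onto \<open>h\<close>.\<close>

lemma
  assumes "on_sphere f" and h: "square_integrable h"
  shows summable_integral_dPsi_mult_Aop:
      "summable (\<lambda>k. \<integral>s. dPsi k f s * Aop (Suc k) h s \<partial>lborel)"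
    and integral_dP_mult:
      "(\<integral>\<xi>. dP \<Phi>1 \<nu> f \<xi> * h \<xi> \<partial>lborel) = (\<Sum>k. \<integral>s. dPsi k f s * Aop (Suc k) h s \<partial>lborel)"
proof -
  have [measurable]: "h \<in> borel_measurable lborel" using h by (rule square_integrable_measurable)
  define H where "H = (\<integral>x. (h x)\<^sup>2 \<partial>lborel)"
  have "0 \<le> H" unfolding H_def by simp
  have integrable_terms: "integrable lborel (\<lambda>\<xi>. dP_term k f \<xi> * h \<xi>)" for k
    by (rule square_integrable_integrable_mult[OF square_integrable_dP_term[OF assms(1)] h])
  have "(\<integral>\<xi>. \<bar>dP_term k f \<xi>\<bar> * \<bar>h \<xi>\<bar> \<partial>lborel) \<le> term_bound k * sqrt H" for k
  proof (rule power2_le_imp_le)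
    have "(\<integral>\<xi>. \<bar>dP_term k f \<xi>\<bar> * \<bar>h \<xi>\<bar> \<partial>lborel)\<^sup>2 \<le> (\<integral>\<xi>. (dP_term k f \<xi>)\<^sup>2 \<partial>lborel) * H"
      using square_integrable_Cauchy_Schwarz[OF square_integrable_abs[OF square_integrable_dP_term[OF assms(1)]]
          square_integrable_abs[OF h]] by (simp add: H_def)
    also have "\<dots> \<le> (term_bound k)\<^sup>2 * H"
      by (intro mult_right_mono integral_dP_term_square_le[OF assms(1)] \<open>0 \<le> H\<close>)
    finally show "(\<integral>\<xi>. \<bar>dP_term k f \<xi>\<bar> * \<bar>h \<xi>\<bar> \<partial>lborel)\<^sup>2 \<le> (term_bound k * sqrt H)\<^sup>2"
      using \<open>0 \<le> H\<close> by (simp add: power_mult_distrib)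
  qed (use term_bound_nonneg \<open>0 \<le> H\<close> in simp)
  then have summable_norms: "summable (\<lambda>k. \<integral>\<xi>. norm (dP_term k f \<xi> * h \<xi>) \<partial>lborel)"
    by (intro summable_comparison_test'[OF summable_mult2[OF summable_term_bound], of 0])
      (simp add: abs_mult)
  have AE_summable: "AE \<xi> in lborel. summable (\<lambda>k. norm (dP_term k f \<xi> * h \<xi>))"
  proof (rule AE_I2)
    fix \<xi>
    show "summable (\<lambda>k. norm (dP_term k f \<xi> * h \<xi>))"
      using dP_term_abs_le[OF assms(1)]
      by (intro summable_comparison_test'[OF summable_mult2[OF summable_term_bound, of "\<bar>h \<xi>\<bar>"], of 0])
        (simp add: abs_mult mult_right_mono)
  qed
  have adjoint: "(\<integral>\<xi>. dP_term k f \<xi> * h \<xi> \<partial>lborel) = (\<integral>s. dPsi k f s * Aop (Suc k) h s \<partial>lborel)" for k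
    unfolding dP_term_def by (rule Aop_adjoint[OF h square_integrable_dPsi[OF assms(1)]])
  show "summable (\<lambda>k. \<integral>s. dPsi k f s * Aop (Suc k) h s \<partial>lborel)"
    using summable_integral[OF integrable_terms AE_summable summable_norms] by (simp add: adjoint)
  have "(\<integral>\<xi>. dP \<Phi>1 \<nu> f \<xi> * h \<xi> \<partial>lborel) = (\<integral>\<xi>. (\<Sum>k. dP_term k f \<xi> * h \<xi>) \<partial>lborel)"
    by (simp add: dP_eq_suminf_dP_term suminf_mult2[OF summable_dP_term[OF assms(1)]])
  also have "\<dots> = (\<Sum>k. \<integral>\<xi>. dP_term k f \<xi> * h \<xi> \<partial>lborel)"
    by (rule integral_suminf[OF integrable_terms AE_summable summable_norms])
  finally show "(\<integral>\<xi>. dP \<Phi>1 \<nu> f \<xi> * h \<xi> \<partial>lborel) = (\<Sum>k. \<integral>s. dPsi k f s * Aop (Suc k) h s \<partial>lborel)"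
    by (simp add: adjoint)
qed


lemma integrable_Psi_Aop:
  assumes "on_sphere f"
  shows "integrable lborel (\<lambda>s. Psi \<Phi> \<Phi>1 \<nu> (Suc k) (Aop (Suc k) f s))"
proof (rule Bochner_Integration.integrable_bound)
  show "integrable lborel (\<lambda>s. curvature k * (Aop (Suc k) f s)\<^sup>2)"
    using square_integrable_integrable[OF square_integrable_Aop[OF on_sphereD(1)[OF assms]]] by simp
  show "AE s in lborel. norm (Psi \<Phi> \<Phi>1 \<nu> (Suc k) (Aop (Suc k) f s)) \<le> norm (curvature k * (Aop (Suc k) f s)\<^sup>2)"
    using Psi_Aop_nonneg[OF assms] Psi_Aop_le[OF assms] by (simp add: AE_I2 order_trans[OF _ abs_ge_self])
qed (use assms in measurable)

lemma
  assumes "on_sphere f"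
  shows summable_integral_Psi_Aop: "summable (\<lambda>k. \<integral>s. Psi \<Phi> \<Phi>1 \<nu> (Suc k) (Aop (Suc k) f s) \<partial>lborel)"
    and Pfun_eq_suminf: "Pfun \<Phi> \<Phi>1 \<nu> f = (\<Sum>k. \<integral>s. Psi \<Phi> \<Phi>1 \<nu> (Suc k) (Aop (Suc k) f s) \<partial>lborel)"
proof -
  define Q where "Q k s = Psi \<Phi> \<Phi>1 \<nu> (Suc k) (Aop (Suc k) f s)" for k s
  have Q_nonneg: "0 \<le> Q k s" for k s unfolding Q_def by (rule Psi_Aop_nonneg[OF assms])
  have Q_integrable: "integrable lborel (Q k)" for k
    unfolding Q_def[abs_def] by (rule integrable_Psi_Aop[OF assms])
  have "Q k s \<le> curvature k * (avg_bound k)\<^sup>2" for k s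
  proof -
    have "\<bar>Aop (Suc k) f s\<bar> \<le> \<bar>avg_bound k\<bar>" using Aop_abs_le_avg_bound[OF assms, of k s] by simp
    then have "curvature k * (Aop (Suc k) f s)\<^sup>2 \<le> curvature k * (avg_bound k)\<^sup>2"
      using curvature_nonneg[of k] by (simp add: abs_le_square_iff mult_left_mono)
    then show ?thesis using Psi_Aop_le[OF assms, of k s] by (simp add: Q_def)
  qed
  also have "curvature k * (avg_bound k)\<^sup>2 \<le> term_bound k * radius" for k
  proof -
    have "real (Suc k) * (2 * K) \<le> (real (Suc k))\<^sup>2 * (2 * K)"
      using K_pos by (intro mult_right_mono) (simp_all add: power2_eq_square)
    then have "curvature k * (real (Suc k) * (2 * K)) \<le> curvature k * ((real (Suc k))\<^sup>2 * (2 * K))"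
      using curvature_nonneg by (rule mult_left_mono)
    also have "\<dots> = term_bound k * radius" by (rule term_bound_mult_radius[symmetric])
    finally show ?thesis by (simp add: avg_bound_square mult_ac)
  qed
  finally have pointwise: "norm (Q k s) \<le> term_bound k * radius" for k s
    using Q_nonneg by simp
  have AE_summable: "AE s in lborel. summable (\<lambda>k. norm (Q k s))"
    using pointwise
    by (intro AE_I2 summable_comparison_test'[OF summable_mult2[OF summable_term_bound], of 0]) simp
  have summable_norms: "summable (\<lambda>k. \<integral>s. norm (Q k s) \<partial>lborel)"
  proof (rule summable_comparison_test'[OF summable_mult2[OF summable_term_bound, of radius], of 0])
    fix k
    have "(\<integral>s. norm (Q k s) \<partial>lborel) \<le> (\<integral>s. curvature k * (Aop (Suc k) f s)\<^sup>2 \<partial>lborel)"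
      using integrable_Psi_Aop[OF assms] Psi_Aop_nonneg[OF assms] Psi_Aop_le[OF assms, of k]
        square_integrable_integrable[OF square_integrable_Aop[OF on_sphereD(1)[OF assms]]]
      by (intro integral_mono) (simp_all add: Q_def)
    also have "\<dots> \<le> curvature k * ((real (Suc k))\<^sup>2 * (2 * K))"
      using integral_Aop_square_le[OF on_sphereD(1)[OF assms], of "Suc k"] on_sphereD(2)[OF assms]
        curvature_nonneg[of k]
      by (simp add: mult_left_mono)
    also have "\<dots> = term_bound k * radius" by (rule term_bound_mult_radius[symmetric])
    finally show "norm (\<integral>s. norm (Q k s) \<partial>lborel) \<le> term_bound k * radius" by simp
  qed
  show "summable (\<lambda>k. \<integral>s. Psi \<Phi> \<Phi>1 \<nu> (Suc k) (Aop (Suc k) f s) \<partial>lborel)"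
    using summable_integral[OF Q_integrable AE_summable summable_norms] by (simp add: Q_def)
  show "Pfun \<Phi> \<Phi>1 \<nu> f = (\<Sum>k. \<integral>s. Psi \<Phi> \<Phi>1 \<nu> (Suc k) (Aop (Suc k) f s) \<partial>lborel)"
    using integral_suminf[OF Q_integrable AE_summable summable_norms] by (simp add: Q_def Pfun_def)
qed

text \<open>Integrate and sum the tangent inequalities of the convex \<open>\<Psi>\<^sub>m\<close> at \<open>A\<^sub>m f\<close>.\<close>

lemma Pfun_above_tangent:
  assumes f: "on_sphere f" and g: "on_sphere g"
  shows "(\<integral>x. dP \<Phi>1 \<nu> f x * g x \<partial>lborel) - (\<integral>x. dP \<Phi>1 \<nu> f x * f x \<partial>lborel)
    \<le> Pfun \<Phi> \<Phi>1 \<nu> g - Pfun \<Phi> \<Phi>1 \<nu> f"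
proof -
  define T where "T h k = (\<integral>s. dPsi k f s * Aop (Suc k) h s \<partial>lborel)" for h k
  define Q where "Q h k = (\<integral>s. Psi \<Phi> \<Phi>1 \<nu> (Suc k) (Aop (Suc k) h s) \<partial>lborel)" for h k
  have sf: "square_integrable f" and sg: "square_integrable g" using f g by (simp_all add: on_sphereD)
  have integrable_T: "integrable lborel (\<lambda>s. dPsi k f s * Aop (Suc k) h s)" if "square_integrable h" for h k
    by (rule square_integrable_integrable_mult[OF square_integrable_dPsi[OF f] square_integrable_Aop[OF that]])
  have "T g k - T f k \<le> Q g k - Q f k" for k
  proof -
    have "(\<integral>s. Psi \<Phi> \<Phi>1 \<nu> (Suc k) (Aop (Suc k) f s)
          + (dPsi k f s * Aop (Suc k) g s - dPsi k f s * Aop (Suc k) f s) \<partial>lborel)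
        \<le> Q g k"
      unfolding Q_def
      using Psi_Aop_above_tangent[OF f g, of k] integrable_Psi_Aop[OF f] integrable_Psi_Aop[OF g]
        integrable_T[OF sf] integrable_T[OF sg]
      by (intro integral_mono) (simp_all add: algebra_simps)
    then show ?thesis
      using integrable_Psi_Aop[OF f] integrable_T[OF sf] integrable_T[OF sg] by (simp add: T_def Q_def)
  qed
  then have "(\<Sum>k. T g k - T f k) \<le> (\<Sum>k. Q g k - Q f k)"
    using summable_integral_dPsi_mult_Aop[OF f] summable_integral_Psi_Aop[OF f] summable_integral_Psi_Aop[OF g]
    by (intro suminf_le summable_diff) (simp_all add: T_def Q_def sf sg)
  then show ?thesis
    using summable_integral_dPsi_mult_Aop[OF f] summable_integral_Psi_Aop[OF f] summable_integral_Psi_Aop[OF g]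
      integral_dP_mult[OF f sf] integral_dP_mult[OF f sg] Pfun_eq_suminf[OF f] Pfun_eq_suminf[OF g]
    by (simp add: suminf_diff T_def Q_def sf sg)
qed

lemma summable_eta: "summable (\<lambda>m. real (Suc m) * \<Phi>1 (Suc m) (\<nu> * real (Suc m)))"
proof (rule summable_comparison_test'[OF summable_minus[OF summable_\<Phi>1], of 0])
  fix m :: nat
  have "\<Phi>1 (Suc m) (\<nu> * real (Suc m) - avg_bound m) \<le> \<Phi>1 (Suc m) (\<nu> * real (Suc m))"
    using avg_bound_less[of m] avg_bound_nonneg[of m]
    by (intro potential_profile.P1_mono[OF potential_profile_Suc]) simp_all
  moreover have "\<Phi>1 (Suc m) (\<nu> * real (Suc m)) \<le> 0" using \<Phi>_signs[of "Suc m" "\<nu> * real (Suc m)"] \<nu>_pos by simp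
  ultimately show "norm (real (Suc m) * \<Phi>1 (Suc m) (\<nu> * real (Suc m)))
      \<le> - (\<Phi>1 (Suc m) (\<nu> * real (Suc m) - sqrt (2 * K * real (Suc m))) * real (Suc m))"
    by (simp add: avg_bound_def abs_mult mult_left_mono mult.commute)
qed

text \<open>The first summand is strictly convex; since \<open>A\<^sub>1\<close> is injective on nonnegative functions,
  \<open>\<langle>\<partial>\<P>(f), f\<rangle> = 0\<close> would force \<open>f = 0\<close>, which is not on the sphere.\<close>

lemma integral_dP_square_pos:
  assumes f: "on_sphere f" and nonneg: "AE x in lborel. 0 \<le> f x"
  shows "0 < (\<integral>x. (dP \<Phi>1 \<nu> f x)\<^sup>2 \<partial>lborel)"
proof (rule ccontr)
  assume "\<not> ?thesis"
  moreover have "0 \<le> (\<integral>x. (dP \<Phi>1 \<nu> f x)\<^sup>2 \<partial>lborel)" by simp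
  ultimately have "(\<integral>x. (dP \<Phi>1 \<nu> f x)\<^sup>2 \<partial>lborel) = 0" by simp
  then have "AE x in lborel. dP \<Phi>1 \<nu> f x = 0"
    using square_integrable_integrable[OF square_integrable_dP[OF f]]
    by (intro integral_square_eq_0_imp_AE_0)
  then have "(\<integral>x. dP \<Phi>1 \<nu> f x * f x \<partial>lborel) = 0"
    by (simp add: integral_eq_zero_AE eventually_mono)
  then have sum0: "(\<Sum>k. \<integral>s. dPsi k f s * Aop (Suc k) f s \<partial>lborel) = 0"
    using integral_dP_mult[OF f on_sphereD(1)[OF f]] by simp
  have integrable_terms: "integrable lborel (\<lambda>s. dPsi k f s * Aop (Suc k) f s)" for k
    by (rule square_integrable_integrable_mult[OF square_integrable_dPsi[OF f]
          square_integrable_Aop[OF on_sphereD(1)[OF f]]])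
  have terms_nonneg: "0 \<le> dPsi k f s * Aop (Suc k) f s" for k s
    using Aop_mult_dPsi_nonneg[OF f] by (simp add: mult.commute)
  have "(\<integral>s. dPsi 0 f s * Aop (Suc 0) f s \<partial>lborel) = 0"
    using sum0 suminf_eq_zero_iff[OF summable_integral_dPsi_mult_Aop[OF f on_sphereD(1)[OF f]]]
      terms_nonneg by (simp add: Bochner_Integration.integral_nonneg)
  then have "AE s in lborel. dPsi 0 f s * Aop (Suc 0) f s = 0"
    using integrable_terms terms_nonneg by (subst (asm) integral_nonneg_eq_0_iff_AE) auto
  moreover have "Aop (Suc 0) f s = 0" if "dPsi 0 f s * Aop (Suc 0) f s = 0" for s
  proof (rule ccontr)
    assume "Aop (Suc 0) f s \<noteq> 0"
    then have "0 < Aop (Suc 0) f s * dPsi 0 f s"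
      unfolding dPsi_def Psi'_eq_Ps'
      using \<Phi>2_1_pos by (intro potential_profile.Ps'_sign_strict[OF potential_profile_Suc]
          Aop_abs_le_avg_bound[OF f]) simp_all
    then have "0 < dPsi 0 f s * Aop (Suc 0) f s" by (simp add: mult.commute)
    with that show False by linarith
  qed
  ultimately have "AE s in lborel. Aop (Suc 0) f s = 0" by (auto elim: AE_mp)
  then have "AE x in lborel. f x = 0"
    by (rule Aop_eq_0_imp_AE_0[OF on_sphereD(1)[OF f] nonneg _ zero_less_Suc])
  then have "(\<integral>x. (f x)\<^sup>2 \<partial>lborel) = 0"
    by (simp add: integral_eq_zero_AE eventually_mono)
  then show False using on_sphereD(2)[OF f] K_pos by simp
qed

end

section \<open>The improvement step\<close>

lemma L2norm_square: "(L2norm f)\<^sup>2 = (\<integral>x. (f x)\<^sup>2 \<partial>lborel)"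
  by (simp add: L2norm_def)

locale improvement_step = potential_family +
  fixes W :: "real \<Rightarrow> real"
  assumes W_in_CK: "W \<in> CK K"
begin

lemma W_on_sphere: "on_sphere W"
  using W_in_CK L2norm_square[of W] by (simp add: CK_def Ccl_def on_sphere_def)

lemma L2norm_W: "L2norm W = radius"
  using on_sphereD(2)[OF W_on_sphere] by (simp add: L2norm_def radius_def)

lemma L2norm_dP_pos: "0 < L2norm (dP \<Phi>1 \<nu> W)"
proof -
  have "AE x in lborel. 0 \<le> W x" using W_in_CK by (intro Ccl_AE_nonneg) (simp add: CK_def)
  then show ?thesis unfolding L2norm_def by (simp add: integral_dP_square_pos[OF W_on_sphere])
qed

lemma muW_eq: "muW \<Phi>1 \<nu> W = radius / L2norm (dP \<Phi>1 \<nu> W)"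
  by (simp add: muW_def L2norm_W)

lemma muW_pos: "0 < muW \<Phi>1 \<nu> W"
  unfolding muW_eq using radius_pos L2norm_dP_pos by simp

lemma on_sphere_Top: "on_sphere (Top \<Phi>1 \<nu> W)"
proof -
  have "(\<integral>x. (Top \<Phi>1 \<nu> W x)\<^sup>2 \<partial>lborel) = (muW \<Phi>1 \<nu> W)\<^sup>2 * (L2norm (dP \<Phi>1 \<nu> W))\<^sup>2"
    by (simp add: Top_def power_mult_distrib L2norm_square)
  also have "\<dots> = 2 * K"
    using L2norm_dP_pos by (simp add: muW_eq power_divide radius_square)
  finally show ?thesis
    unfolding on_sphere_def Top_def
    using square_integrable_cmult[OF square_integrable_dP[OF W_on_sphere]] by simp
qed

lemma integral_dP_mult_Top: "(\<integral>x. dP \<Phi>1 \<nu> W x * Top \<Phi>1 \<nu> W x \<partial>lborel) = radius * L2norm (dP \<Phi>1 \<nu> W)"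
proof -
  have "(\<integral>x. dP \<Phi>1 \<nu> W x * Top \<Phi>1 \<nu> W x \<partial>lborel) = muW \<Phi>1 \<nu> W * (\<integral>x. (dP \<Phi>1 \<nu> W x)\<^sup>2 \<partial>lborel)"
    by (simp add: Top_def power2_eq_square mult_ac)
  also have "\<dots> = muW \<Phi>1 \<nu> W * (L2norm (dP \<Phi>1 \<nu> W))\<^sup>2" by (simp add: L2norm_square)
  finally show ?thesis using L2norm_dP_pos by (simp add: muW_eq power2_eq_square)
qed

lemma integral_dP_mult_W_le: "(\<integral>x. dP \<Phi>1 \<nu> W x * W x \<partial>lborel) \<le> radius * L2norm (dP \<Phi>1 \<nu> W)"
proof -
  have "(\<integral>x. dP \<Phi>1 \<nu> W x * W x \<partial>lborel)\<^sup>2 \<le> (L2norm (dP \<Phi>1 \<nu> W) * radius)\<^sup>2"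
    using square_integrable_Cauchy_Schwarz[OF square_integrable_dP[OF W_on_sphere] on_sphereD(1)[OF W_on_sphere]]
    by (simp add: power_mult_distrib L2norm_square radius_square on_sphereD(2)[OF W_on_sphere])
  then show ?thesis
    using L2norm_dP_pos radius_pos by (simp add: abs_le_square_iff[symmetric] mult.commute)
qed

lemma Pfun_le_Pfun_Top: "Pfun \<Phi> \<Phi>1 \<nu> W \<le> Pfun \<Phi> \<Phi>1 \<nu> (Top \<Phi>1 \<nu> W)"
  using Pfun_above_tangent[OF W_on_sphere on_sphere_Top] integral_dP_mult_Top integral_dP_mult_W_le
  by simp

text \<open>Equality in the tangent inequality forces equality in Cauchy--Schwarz, that is
  \<open>\<parallel>\<partial>\<P>(W)\<parallel> W = \<parallel>W\<parallel> \<partial>\<P>(W)\<close>.\<close>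

lemma AE_fixed_if_Pfun_Top_eq:
  assumes "Pfun \<Phi> \<Phi>1 \<nu> (Top \<Phi>1 \<nu> W) = Pfun \<Phi> \<Phi>1 \<nu> W"
  shows "AE x in lborel. W x = Top \<Phi>1 \<nu> W x"
proof -
  define D where "D = dP \<Phi>1 \<nu> W"
  define L where "L = L2norm D"
  have "0 < L" unfolding L_def D_def by (rule L2norm_dP_pos)
  have sD: "square_integrable D" and sW: "square_integrable W"
    unfolding D_def by (rule square_integrable_dP[OF W_on_sphere], rule on_sphereD(1)[OF W_on_sphere])
  have "radius * L \<le> (\<integral>x. D x * W x \<partial>lborel)"
    using Pfun_above_tangent[OF W_on_sphere on_sphere_Top] integral_dP_mult_Top assms
    by (simp add: D_def L_def)
  have square_integrable_diff: "square_integrable (\<lambda>x. L * W x - radius * D x)"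
    by (intro square_integrable_diff square_integrable_cmult sD sW)
  have "(\<integral>x. (L * W x - radius * D x)\<^sup>2 \<partial>lborel)
      = L\<^sup>2 * (\<integral>x. (W x)\<^sup>2 \<partial>lborel) - 2 * L * radius * (\<integral>x. D x * W x \<partial>lborel) + radius\<^sup>2 * L\<^sup>2"
  proof -
    have "(\<lambda>x. (L * W x - radius * D x)\<^sup>2) = (\<lambda>x. L\<^sup>2 * (W x)\<^sup>2 - 2 * L * radius * (D x * W x) + radius\<^sup>2 * (D x)\<^sup>2)"
      by (simp add: fun_eq_iff power2_eq_square algebra_simps)
    then show ?thesis
      using square_integrable_integrable[OF sD] square_integrable_integrable[OF sW]
        square_integrable_integrable_mult[OF sD sW]
      by (simp add: L_def L2norm_square)
  qed
  also have "\<dots> = 2 * (L * radius) * (L * radius - (\<integral>x. D x * W x \<partial>lborel))"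
    unfolding on_sphereD(2)[OF W_on_sphere] radius_square[symmetric]
    by (simp add: power2_eq_square algebra_simps)
  also have "\<dots> \<le> 0"
    using \<open>0 < L\<close> radius_pos \<open>radius * L \<le> (\<integral>x. D x * W x \<partial>lborel)\<close>
    by (simp add: mult_nonneg_nonpos mult.commute)
  finally have "AE x in lborel. L * W x - radius * D x = 0"
    using square_integrable_integrable[OF square_integrable_diff]
    by (intro integral_square_eq_0_imp_AE_0) (simp_all add: antisym)
  then show ?thesis
    by eventually_elim (use \<open>0 < L\<close> in \<open>simp add: Top_def muW_eq L2norm_W D_def L_def field_simps\<close>)
qed

lemma Pfun_Top_eq_if_AE_fixed:
  assumes "AE x in lborel. W x = Top \<Phi>1 \<nu> W x"
  shows "Pfun \<Phi> \<Phi>1 \<nu> (Top \<Phi>1 \<nu> W) = Pfun \<Phi> \<Phi>1 \<nu> W"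
proof -
  have "Aop m (Top \<Phi>1 \<nu> W) s = Aop m W s" for m s
    using assms on_sphereD(1)[OF on_sphere_Top] on_sphereD(1)[OF W_on_sphere]
    by (intro Aop_cong_AE) (auto simp: square_integrable_def elim: AE_mp)
  then show ?thesis by (simp add: Pfun_def)
qed

text \<open>The fixed-point equation \<open>W = \<mu> \<partial>\<P>(W)\<close> with \<open>\<Psi>\<^sub>m'\<close> split into its \<open>W\<close>-dependent part and the
  constant \<open>\<Phi>\<^sub>m'(\<nu> m)\<close>, which \<open>A\<^sub>m\<close> multiplies by \<open>m\<close>.\<close>

lemma Euler_Lagrange:
  assumes "AE x in lborel. W x = Top \<Phi>1 \<nu> W x"
  shows "AE x in lborel. (muW \<Phi>1 \<nu> W powr (-1/2))\<^sup>2 * W x =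
          (\<Sum>m. Aop (Suc m) (\<lambda>s. - \<Phi>1 (Suc m) (\<nu> * real (Suc m) - Aop (Suc m) W s)) x)
          + (\<Sum>m. real (Suc m) * \<Phi>1 (Suc m) (\<nu> * real (Suc m)))"
proof -
  have c_square: "(muW \<Phi>1 \<nu> W powr (-1/2))\<^sup>2 = 1 / muW \<Phi>1 \<nu> W"
    using muW_pos by (simp add: power2_eq_square powr_add[symmetric] powr_minus_divide)
  define X where "X k x = Aop (Suc k) (\<lambda>s. - \<Phi>1 (Suc k) (\<nu> * real (Suc k) - Aop (Suc k) W s)) x" for k x
  define Y where "Y k = real (Suc k) * \<Phi>1 (Suc k) (\<nu> * real (Suc k))" for k
  have dP_term_split: "dP_term k W x = X k x + Y k" for k x
  proof -
    have "dPsi k W = (\<lambda>s. - \<Phi>1 (Suc k) (\<nu> * real (Suc k) - Aop (Suc k) W s) + \<Phi>1 (Suc k) (\<nu> * real (Suc k)))"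
      by (simp add: fun_eq_iff dPsi_def Psi'_def)
    moreover have "set_integrable lborel {x - real (Suc k) / 2..x + real (Suc k) / 2}
        (\<lambda>s. - \<Phi>1 (Suc k) (\<nu> * real (Suc k) - Aop (Suc k) W s))"
    proof -
      have "set_integrable lborel {x - real (Suc k) / 2..x + real (Suc k) / 2}
          (\<lambda>s. dPsi k W s - \<Phi>1 (Suc k) (\<nu> * real (Suc k)))"
        using square_integrable_set_integrable_Icc[OF square_integrable_dPsi[OF W_on_sphere]]
        by (intro set_integral_diff(1))
          (simp_all add: set_integrable_def integrable_indicator_iff emeasure_lborel_Icc_eq)
      then show ?thesis by (simp add: dPsi_def Psi'_def)
    qed
    ultimately show ?thesis
      unfolding dP_term_def X_def Y_def by (simp only: Aop_add_const)
  qed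
  have "summable Y" unfolding Y_def[abs_def] by (rule summable_eta)
  have "summable (\<lambda>k. X k x)" for x
    using summable_diff[OF summable_dP_term[OF W_on_sphere, of x] \<open>summable Y\<close>] by (simp add: dP_term_split)
  then have dP_split: "dP \<Phi>1 \<nu> W x = (\<Sum>k. X k x) + (\<Sum>k. Y k)" for x
    by (simp add: dP_eq_suminf_dP_term dP_term_split suminf_add[OF _ \<open>summable Y\<close>])
  show ?thesis
    using assms
  proof eventually_elim
    case (elim x)
    then have "1 / muW \<Phi>1 \<nu> W * W x = dP \<Phi>1 \<nu> W x" using muW_pos by (simp add: Top_def)
    then show ?case unfolding c_square by (simp add: dP_split X_def Y_def)
  qed
qed

end

theorem lemma2p7:
  fixes \<Phi> \<Phi>1 \<Phi>2 \<Phi>3 \<Phi>4 :: "nat \<Rightarrow> real \<Rightarrow> real"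
    and \<nu> K \<gamma> :: real and W :: "real \<Rightarrow> real"
  assumes \<nu>: "\<nu> > 0"
    and K: "0 < K" "K < \<nu>\<^sup>2 / 2"
    and d1: "\<And>m x. x \<ge> 0 \<Longrightarrow> (\<Phi> m has_real_derivative \<Phi>1 m x) (at x within {0..})"
    and d2: "\<And>m x. x \<ge> 0 \<Longrightarrow> (\<Phi>1 m has_real_derivative \<Phi>2 m x) (at x within {0..})"
    and d3: "\<And>m x. x \<ge> 0 \<Longrightarrow> (\<Phi>2 m has_real_derivative \<Phi>3 m x) (at x within {0..})"
    and d4: "\<And>m x. x \<ge> 0 \<Longrightarrow> (\<Phi>3 m has_real_derivative \<Phi>4 m x) (at x within {0..})"
    and c4: "\<And>m. continuous_on {0..} (\<Phi>4 m)"
    and sgn: "\<And>m x. m \<ge> 1 \<Longrightarrow> x \<ge> 0 \<Longrightarrow>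
               \<Phi> m x \<ge> 0 \<and> \<Phi>1 m x \<le> 0 \<and> \<Phi>2 m x \<ge> 0 \<and> \<Phi>3 m x \<le> 0 \<and> \<Phi>4 m x \<ge> 0"
    and strict: "\<And>x. x > 0 \<Longrightarrow>
               \<Phi> 1 x > 0 \<and> \<Phi>1 1 x < 0 \<and> \<Phi>2 1 x > 0 \<and> \<Phi>3 1 x < 0 \<and> \<Phi>4 1 x > 0"
    and \<gamma>: "5/2 < \<gamma>" "\<gamma> < 3"
    and s1: "summable (\<lambda>m. \<Phi>1 (Suc m) (\<nu> * real (Suc m) - sqrt (2 * K * real (Suc m))) * real (Suc m))"
    and s2: "summable (\<lambda>m. \<Phi>2 (Suc m) (\<nu> * real (Suc m) - sqrt (2 * K * real (Suc m))) * (real (Suc m))\<^sup>2)"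
    and s3: "summable (\<lambda>m. \<Phi>2 (Suc m) (\<nu> * real (Suc m)) * real (Suc m) powr \<gamma>)"
    and s4: "summable (\<lambda>m. \<Phi>3 (Suc m) (\<nu> * real (Suc m) - sqrt (2 * K * real (Suc m))) * real (Suc m) powr (3/2))"
    and W: "W \<in> CK K"
  shows "Pfun \<Phi> \<Phi>1 \<nu> (Top \<Phi>1 \<nu> W) \<ge> Pfun \<Phi> \<Phi>1 \<nu> W
    \<and> (Pfun \<Phi> \<Phi>1 \<nu> (Top \<Phi>1 \<nu> W) = Pfun \<Phi> \<Phi>1 \<nu> W \<longleftrightarrow> (AE x in lborel. W x = Top \<Phi>1 \<nu> W x))
    \<and> ((AE x in lborel. W x = Top \<Phi>1 \<nu> W x) \<longrightarrow>
           summable (\<lambda>m. real (Suc m) * \<Phi>1 (Suc m) (\<nu> * real (Suc m))) \<and>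
           (let c = muW \<Phi>1 \<nu> W powr (-1/2);
                \<eta> = (\<Sum>m. real (Suc m) * \<Phi>1 (Suc m) (\<nu> * real (Suc m)))
            in AE x in lborel. c\<^sup>2 * W x =
                 (\<Sum>m. Aop (Suc m) (\<lambda>s. - \<Phi>1 (Suc m) (\<nu> * real (Suc m) - Aop (Suc m) W s)) x) + \<eta>))"
proof -
  interpret improvement_step \<Phi> \<Phi>1 \<Phi>2 \<Phi>3 \<nu> K W
  proof
    fix m and x :: real
    assume "0 < x"
    then show "(\<Phi> m has_real_derivative \<Phi>1 m x) (at x)" "(\<Phi>1 m has_real_derivative \<Phi>2 m x) (at x)"
      "(\<Phi>2 m has_real_derivative \<Phi>3 m x) (at x)" "0 < \<Phi>2 1 x"
      using d1 d2 d3 strict by (simp_all add: has_real_derivative_at_if_within_atLeast)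
  qed (use \<nu> K sgn s1 s2 W in simp_all)
  show ?thesis
    using Pfun_le_Pfun_Top AE_fixed_if_Pfun_Top_eq Pfun_Top_eq_if_AE_fixed summable_eta Euler_Lagrange
    by (auto simp: Let_def)
qed

end
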